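(* Let $H(z)$ be a function analytic at $0$ and let $B(z)=\sum_{n>0}b_nz^n$ be a formal power series whose coefficients satisfy $b_n=0$ for all odd $n$ and, for $n$ even, \[ b_n \approx n^{\alpha n}\beta^n n^\gamma\,\tilde B(n^{-1}) \] for some $\alpha\in\frac12\mathbb{Z}_{>0}$, $\beta\in\mathbb{R}_{>0}$, $\gamma\in\mathbb{R}$ and nonzero formal power series $\tilde B(z)$. Define \[ \tilde B_j(z) = e^{-\alpha j}\beta^{-j} z^{\alpha j}(1-jz)^{\gamma-\alpha j}\, e^{\alpha z^{-1}(\log(1-jz)+jz)}\,\tilde B\!\left(\frac{z}{1-jz}\right), \qquad \tilde B_H(z) = \sum_{j\geq 0}\tilde B_{2j}(z)\,[x^{2j}]H'(B(x)). \] Then, as $n\to\infty$ along even $n$, \[ [z^n]H(B(z)) \approx n^{\alpha n}\beta^n n^\gamma\,\tilde B_H(n^{-1}). \]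
   Context: For a formal power series $\tilde F(z)$, $f_n \approx c_n\tilde F(n^{-1})$ means that for every fixed $r\geq 0$, $f_n = c_n\big(\sum_{\ell=0}^{r-1}[z^\ell]\tilde F(z)\,n^{-\ell} + O(n^{-r})\big)$ as $n\to\infty$ (here along even $n$). $[x^j]F$ denotes the coefficient of $x^j$; $H(B(x))$, $H'(B(x))$ are formal compositions (well defined since $B(0)=0$). *)

theory Defs
  imports "HOL-Analysis.Analysis" "HOL-Library.Landau_Symbols"
begin

text \<open>Asymptotic expansion along even n:
  f_n ~ c_n F(1/n) means: for every r, f_n - c_n * sum_{l<r} F_l n^(-l) = O(|c_n| n^(-r)),
  as n = 2m, m \<rightarrow> \<infinity>.\<close>
definition asymp_exp_even :: "(nat \<Rightarrow> complex) \<Rightarrow> (nat \<Rightarrow> real) \<Rightarrow> complex fps \<Rightarrow> bool" where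
  "asymp_exp_even f c F \<longleftrightarrow>
     (\<forall>r::nat. (\<lambda>m. f (2*m) - complex_of_real (c (2*m)) * (\<Sum>l<r. fps_nth F l / of_nat (2*m) ^ l))
                 \<in> O(\<lambda>m. complex_of_real (c (2*m)) / of_nat (2*m) ^ r))"

text \<open>The scale n^(alpha n) beta^n n^gamma, with alpha = a2/2.\<close>
definition scale :: "nat \<Rightarrow> real \<Rightarrow> real \<Rightarrow> nat \<Rightarrow> real" where
  "scale a2 \<beta> \<gamma> n = real n powr (real a2 / 2 * real n) * \<beta> ^ n * real n powr \<gamma>"

text \<open>Btilde_k for k = 2j (even index), with alpha = a2/2, so that z^(alpha k) = z^(a2 j):
  e^(-alpha k) beta^(-k) z^(alpha k) (1-kz)^(gamma-alpha k)
    exp(alpha z^(-1) (log(1-kz)+kz)) Bt(z/(1-kz)).\<close>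
definition Btilde_even :: "nat \<Rightarrow> real \<Rightarrow> real \<Rightarrow> complex fps \<Rightarrow> nat \<Rightarrow> complex fps" where
  "Btilde_even a2 \<beta> \<gamma> Bt j =
     (let \<alpha> = complex_of_real (real a2 / 2); k = of_nat (2*j) :: complex in
      fps_const (exp (- (\<alpha> * k)) / complex_of_real \<beta> ^ (2*j))
      * fps_X ^ (a2 * j)
      * (fps_binomial (complex_of_real \<gamma> - \<alpha> * k) oo (- fps_const k * fps_X))
      * (fps_exp 1 oo (fps_const \<alpha> *
            fps_shift 1 ((fps_ln 1 oo (- fps_const k * fps_X)) + fps_const k * fps_X)))
      * (Bt oo (fps_X / (1 - fps_const k * fps_X))))"

definition Btilde_H :: "nat \<Rightarrow> real \<Rightarrow> real \<Rightarrow> complex fps \<Rightarrow> complex fps \<Rightarrow> complex fps \<Rightarrow> complex fps" where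
  "Btilde_H a2 \<beta> \<gamma> Bt H B =
     Abs_fps (\<lambda>l. \<Sum>j. fps_nth (Btilde_even a2 \<beta> \<gamma> Bt j) l * fps_nth (fps_deriv H oo B) (2*j))"

end

theory Submission
  imports Defs "HOL-Real_Asymp.Real_Asymp" "HOL-Complex_Analysis.Complex_Analysis"
begin

text \<open>Write c_n = n^{\<alpha> n} \<beta>^n n^\<gamma>. This scale is sub-convolutive: the sum of c_k c_{n-k} over
  s \<le> k \<le> n - s is O(c_{n-s}), hence O(c_n n^{-\<alpha> s}). Via majorant series, coefficients
  of size O(c_n) therefore survive composition with functions analytic at 0. Splitting B = P + Q
  into its part of degree at most 2r and the tail and expanding H(P + Q) to second order in Q
  (Bender's method) gives [z^n] H(B) = \<Sum>_{k \<le> 2r} [z^k] H'(B) b_{n-k} + O(c_n n^{-r}), where only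
  even k contribute. Finally b_{n-2j} is expanded in the scale c_n: the ratio c_{n-2j}/c_n and the
  powers (n - 2j)^{-l} are values at z = 1/n of functions analytic at 0, and the Taylor coefficients
  of their product with B~ are those of B~_{2j}.\<close>

section \<open>The scale n^{\<alpha> n} \<beta>^n n^\<gamma>\<close>

lemma scale_pos: "\<beta> > 0 \<Longrightarrow> n \<ge> 1 \<Longrightarrow> scale a \<beta> \<gamma> n > 0"
  by (simp add: scale_def)

lemma scale_nonneg: "\<beta> > 0 \<Longrightarrow> scale a \<beta> \<gamma> n \<ge> 0"
  by (cases "n = 0") (auto simp: scale_def)

lemma finite_range_bound:
  fixes f g :: "nat \<Rightarrow> real"
  assumes "\<And>n. n0 \<le> n \<Longrightarrow> n < N \<Longrightarrow> g n > 0"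
  shows "\<exists>D\<ge>C. \<forall>n. n0 \<le> n \<longrightarrow> n < N \<longrightarrow> f n \<le> D * g n"
proof (intro exI conjI allI impI)
  define S where "S = (\<Sum>n\<in>{n0..<N}. \<bar>f n\<bar> / g n)"
  have "S \<ge> 0"
    unfolding S_def using assms by (intro sum_nonneg divide_nonneg_nonneg) (auto simp: less_imp_le)
  then show "C \<le> max C 0 + S" by linarith
  fix n assume n: "n0 \<le> n" "n < N"
  have "\<bar>f n\<bar> / g n \<le> S"
    unfolding S_def using n assms
    by (intro member_le_sum[where f = "\<lambda>n. \<bar>f n\<bar> / g n"]) (auto simp: less_imp_le)
  also have "\<dots> \<le> max C 0 + S" by simp
  finally show "f n \<le> (max C 0 + S) * g n"
    using assms[OF n] by (simp add: divide_le_eq)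
qed

lemma eventually_bound_imp_bound:
  fixes f g :: "nat \<Rightarrow> real"
  assumes "\<And>n. n \<ge> N \<Longrightarrow> f n \<le> C * g n" and "\<And>n. n0 \<le> n \<Longrightarrow> g n > 0"
  shows "\<exists>D\<ge>0. \<forall>n\<ge>n0. f n \<le> D * g n"
proof -
  obtain D where D: "D \<ge> max C 0" "\<And>n. n0 \<le> n \<Longrightarrow> n < N \<Longrightarrow> f n \<le> D * g n"
    using finite_range_bound[of n0 N g "max C 0" f] assms(2) by blast
  have "f n \<le> D * g n" if "n \<ge> n0" for n
  proof (cases "n < N")
    case False
    have "C * g n \<le> D * g n"
      using D(1) assms(2)[OF that] by (intro mult_right_mono) auto
    with assms(1)[of n] False show ?thesis by linarith
  qed (use D that in auto)
  with D(1) show ?thesis by (intro exI[of _ D]) auto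
qed

lemma powr_le_two_powr_abs_mult:
  fixes x y g :: real
  assumes "0 < x" "x \<le> y" "y \<le> 2 * x"
  shows "x powr g \<le> 2 powr \<bar>g\<bar> * y powr g"
proof (cases "g \<ge> 0")
  case True
  have "1 \<le> (2::real) powr \<bar>g\<bar>" by (rule ge_one_powr_ge_zero) auto
  then have "y powr g \<le> 2 powr \<bar>g\<bar> * y powr g" by (simp add: mult_le_cancel_right1)
  moreover have "x powr g \<le> y powr g" using assms True by (intro powr_mono2) auto
  ultimately show ?thesis by linarith
next
  case False
  have "x powr g \<le> (y / 2) powr g" using assms False by (intro powr_mono2') auto
  also have "\<dots> = 2 powr \<bar>g\<bar> * y powr g"
    using False assms by (simp add: powr_divide powr_minus divide_simps)
  finally show ?thesis .
qed

lemma scale_diff_le: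
  assumes \<beta>: "\<beta> > 0" and n: "2 * s \<le> n" "1 \<le> n"
  shows "scale a \<beta> \<gamma> (n - s)
           \<le> 2 powr \<bar>\<gamma>\<bar> / \<beta> ^ s * scale a \<beta> \<gamma> n * real n powr (-(real a / 2 * real s))"
proof -
  define \<alpha> where "\<alpha> = real a / 2"
  have ns: "real (n - s) = real n - real s" "real n - real s > 0" using n by auto
  have A: "real (n - s) powr (\<alpha> * real (n - s))
             \<le> real n powr (\<alpha> * real n) * real n powr (-(\<alpha> * real s))"
  proof -
    have "real (n - s) powr (\<alpha> * real (n - s)) \<le> real n powr (\<alpha> * real (n - s))"
      using ns by (intro powr_mono2) (auto simp: \<alpha>_def)
    also have "\<dots> = real n powr (\<alpha> * real n) * real n powr (-(\<alpha> * real s))"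
      by (simp add: ns powr_add[symmetric] algebra_simps)
    finally show ?thesis .
  qed
  have B: "real (n - s) powr \<gamma> \<le> 2 powr \<bar>\<gamma>\<bar> * real n powr \<gamma>"
    using ns n by (intro powr_le_two_powr_abs_mult) auto
  have "scale a \<beta> \<gamma> (n - s) = real (n - s) powr (\<alpha> * real (n - s)) * real (n - s) powr \<gamma> * (\<beta> ^ n / \<beta> ^ s)"
    using n \<beta> by (simp add: scale_def \<alpha>_def power_diff)
  also have "\<dots> \<le> (real n powr (\<alpha> * real n) * real n powr (-(\<alpha> * real s)))
                   * (2 powr \<bar>\<gamma>\<bar> * real n powr \<gamma>) * (\<beta> ^ n / \<beta> ^ s)"
    using A B \<beta> by (intro mult_right_mono mult_mono) auto
  also have "\<dots> = 2 powr \<bar>\<gamma>\<bar> / \<beta> ^ s * scale a \<beta> \<gamma> n * real n powr (-(real a / 2 * real s))"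
    by (simp add: scale_def \<alpha>_def)
  finally show ?thesis .
qed

lemma scale_diff_le_scale_div_power:
  assumes \<beta>: "\<beta> > 0" and n: "2 * s \<le> n" "1 \<le> n" and r: "real r \<le> real a / 2 * real s"
  shows "scale a \<beta> \<gamma> (n - s) \<le> 2 powr \<bar>\<gamma>\<bar> / \<beta> ^ s * (scale a \<beta> \<gamma> n / real n ^ r)"
proof -
  have "real n powr (-(real a / 2 * real s)) \<le> real n powr (- real r)"
    using r n by (intro powr_mono) auto
  also have "\<dots> = 1 / real n ^ r"
    using n by (simp add: powr_minus_divide powr_realpow)
  finally have "real n powr (-(real a / 2 * real s)) \<le> 1 / real n ^ r" .
  then have "2 powr \<bar>\<gamma>\<bar> / \<beta> ^ s * scale a \<beta> \<gamma> n * real n powr (-(real a / 2 * real s))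
             \<le> 2 powr \<bar>\<gamma>\<bar> / \<beta> ^ s * scale a \<beta> \<gamma> n * (1 / real n ^ r)"
    using \<beta> scale_nonneg[OF \<beta>, of a \<gamma> n] by (intro mult_left_mono) auto
  with scale_diff_le[OF \<beta> n, of a \<gamma>] show ?thesis by simp
qed

lemma summable_powr_mult_exp_neg:
  fixes p t :: real
  assumes "0 < t"
  shows "summable (\<lambda>k::nat. real k powr p * exp (-t * real k))"
proof -
  have "(\<lambda>k::nat. real k powr p * exp (-t * real k)) \<in> O(\<lambda>k. exp (-t / 2) ^ k)"
  proof -
    have "exp (-t / 2) ^ k = exp (-(t / 2) * real k)" for k :: nat
      by (simp add: exp_of_nat_mult[symmetric] algebra_simps)
    moreover have "(\<lambda>k::nat. real k powr p * exp (-t * real k)) \<in> O(\<lambda>k. exp (-(t / 2) * real k))"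
      using assms by real_asymp
    ultimately show ?thesis by simp
  qed
  moreover have "summable (\<lambda>k::nat. norm (exp (-t / 2) ^ k))"
    using assms by (simp add: summable_geometric del: exp_minus)
  ultimately show ?thesis by (rule summable_comparison_test_bigo[rotated])
qed

lemma powr_self_mult_le:
  fixes x y \<sigma> \<alpha> :: real
  assumes "1 \<le> \<sigma>" "\<sigma> \<le> x" "2 * x \<le> y" "4 * \<sigma> \<le> y" "\<alpha> \<ge> 0"
  shows "x powr (\<alpha> * x) * (y - x) powr (\<alpha> * (y - x))
           \<le> x powr (\<alpha> * \<sigma>) * exp (-(\<alpha> * ln (3/2)) * (x - \<sigma>)) * (y - \<sigma>) powr (\<alpha> * (y - \<sigma>))"
proof -
  have pos: "x > 0" "y - x > 0" "y - \<sigma> > 0" using assms by auto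
  have 1: "(y - x) powr (\<alpha> * (y - x)) \<le> (y - \<sigma>) powr (\<alpha> * (y - \<sigma>)) * (y - \<sigma>) powr (-(\<alpha> * (x - \<sigma>)))"
  proof -
    have "(y - x) powr (\<alpha> * (y - x)) \<le> (y - \<sigma>) powr (\<alpha> * (y - x))"
      using assms pos by (intro powr_mono2) auto
    then show ?thesis by (simp add: powr_add[symmetric] algebra_simps)
  qed
  have 2: "x powr (\<alpha> * (x - \<sigma>)) * (y - \<sigma>) powr (-(\<alpha> * (x - \<sigma>))) \<le> exp (-(\<alpha> * ln (3/2)) * (x - \<sigma>))"
  proof -
    have "x powr (\<alpha> * (x - \<sigma>)) * (y - \<sigma>) powr (-(\<alpha> * (x - \<sigma>))) = (x / (y - \<sigma>)) powr (\<alpha> * (x - \<sigma>))"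
      using pos by (simp add: powr_minus powr_divide divide_simps)
    also have "\<dots> \<le> (2/3) powr (\<alpha> * (x - \<sigma>))"
      using assms pos by (intro powr_mono2) (auto simp: divide_simps)
    also have "\<dots> = exp (-(\<alpha> * ln (3/2)) * (x - \<sigma>))"
      by (simp add: powr_def ln_div algebra_simps)
    finally show ?thesis .
  qed
  have "x powr (\<alpha> * x) * (y - x) powr (\<alpha> * (y - x))
          \<le> x powr (\<alpha> * x) * ((y - \<sigma>) powr (\<alpha> * (y - \<sigma>)) * (y - \<sigma>) powr (-(\<alpha> * (x - \<sigma>))))"
    using 1 by (intro mult_left_mono) auto
  also have "\<dots> = x powr (\<alpha> * \<sigma>) * (x powr (\<alpha> * (x - \<sigma>)) * (y - \<sigma>) powr (-(\<alpha> * (x - \<sigma>))))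
                   * (y - \<sigma>) powr (\<alpha> * (y - \<sigma>))"
    by (simp add: powr_add[symmetric] algebra_simps)
  also have "\<dots> \<le> x powr (\<alpha> * \<sigma>) * exp (-(\<alpha> * ln (3/2)) * (x - \<sigma>)) * (y - \<sigma>) powr (\<alpha> * (y - \<sigma>))"
    using 2 by (intro mult_right_mono mult_left_mono) auto
  finally show ?thesis .
qed

lemma scale_mult_scale_le:
  fixes k n s :: nat
  assumes \<beta>: "\<beta> > 0" and s: "1 \<le> s" "s \<le> k" "2 * k \<le> n" "4 * s \<le> n"
  shows "scale a \<beta> \<gamma> k * scale a \<beta> \<gamma> (n - k)
           \<le> (2 powr \<bar>\<gamma>\<bar> * \<beta> ^ s * exp (real a / 2 * ln (3/2) * real s))
             * (real k powr (real a / 2 * real s + \<bar>\<gamma>\<bar>) * exp (-(real a / 2 * ln (3/2)) * real k))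
             * scale a \<beta> \<gamma> (n - s)"
proof -
  define \<alpha> where "\<alpha> = real a / 2"
  define \<tau> where "\<tau> = \<alpha> * ln (3/2)"
  have rk: "real (n - k) = real n - real k" "real (n - s) = real n - real s" using s by auto
  have T: "real k powr (\<alpha> * real k) * (real n - real k) powr (\<alpha> * (real n - real k))
             \<le> real k powr (\<alpha> * real s) * exp (-\<tau> * (real k - real s)) * (real n - real s) powr (\<alpha> * (real n - real s))"
    unfolding \<tau>_def using s by (intro powr_self_mult_le) (auto simp: \<alpha>_def)
  have G: "real k powr \<gamma> * (real n - real k) powr \<gamma> \<le> real k powr \<bar>\<gamma>\<bar> * (2 powr \<bar>\<gamma>\<bar> * (real n - real s) powr \<gamma>)"
    using s by (intro mult_mono powr_mono powr_le_two_powr_abs_mult) auto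
  have "scale a \<beta> \<gamma> k * scale a \<beta> \<gamma> (n - k)
          = (real k powr (\<alpha> * real k) * (real n - real k) powr (\<alpha> * (real n - real k)))
            * (real k powr \<gamma> * (real n - real k) powr \<gamma>) * (\<beta> ^ s * \<beta> ^ (n - s))"
    using s by (simp add: scale_def rk \<alpha>_def power_add[symmetric] algebra_simps)
  also have "\<dots> \<le> (real k powr (\<alpha> * real s) * exp (-\<tau> * (real k - real s)) * (real n - real s) powr (\<alpha> * (real n - real s)))
                   * (real k powr \<bar>\<gamma>\<bar> * (2 powr \<bar>\<gamma>\<bar> * (real n - real s) powr \<gamma>)) * (\<beta> ^ s * \<beta> ^ (n - s))"
    using \<beta> by (intro mult_right_mono mult_mono[OF T G]) auto
  also have "\<dots> = (2 powr \<bar>\<gamma>\<bar> * \<beta> ^ s * exp (\<tau> * real s))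
                   * ((real k powr (\<alpha> * real s) * real k powr \<bar>\<gamma>\<bar>) * exp (-\<tau> * real k)) * scale a \<beta> \<gamma> (n - s)"
  proof -
    have "exp (-\<tau> * (real k - real s)) = exp (\<tau> * real s) * exp (-\<tau> * real k)"
      by (simp add: exp_add[symmetric] algebra_simps)
    then show ?thesis by (simp add: scale_def rk \<alpha>_def algebra_simps)
  qed
  finally show ?thesis by (simp add: \<alpha>_def \<tau>_def powr_add)
qed

lemma self_convolution_le_twice_half:
  fixes c :: "nat \<Rightarrow> real"
  assumes "\<And>k. c k \<ge> 0"
  shows "(\<Sum>k=s..n-s. c k * c (n - k)) \<le> 2 * (\<Sum>k=s..n-s. if 2 * k \<le> n then c k * c (n - k) else 0)"
proof -
  define f where "f = (\<lambda>k. if 2 * k \<le> n then c k * c (n - k) else 0)"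
  have "(\<Sum>k=s..n-s. c k * c (n - k)) \<le> (\<Sum>k=s..n-s. f k + f (n - s + s - k))"
  proof (rule sum_mono)
    fix k assume k: "k \<in> {s..n-s}"
    then have nk: "n - s + s - k = n - k" "n - (n - k) = k" by auto
    show "c k * c (n - k) \<le> f k + f (n - s + s - k)"
      using assms by (cases "2 * k \<le> n") (auto simp: f_def nk mult.commute)
  qed
  also have "\<dots> = 2 * (\<Sum>k=s..n-s. f k)"
    by (simp add: sum.distrib sum.atLeastAtMost_rev[of f s "n - s", symmetric])
  finally show ?thesis by (simp add: f_def)
qed

lemma scale_convolution_tail:
  assumes \<beta>: "\<beta> > 0" and s: "1 \<le> s" and a: "a > 0"
  shows "\<exists>D\<ge>0. \<forall>n \<ge> 2 * s. (\<Sum>k=s..n-s. scale a \<beta> \<gamma> k * scale a \<beta> \<gamma> (n - k)) \<le> D * scale a \<beta> \<gamma> (n - s)"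
proof -
  define c where "c = scale a \<beta> \<gamma>"
  define \<tau> where "\<tau> = real a / 2 * ln (3/2)"
  define X where "X = (\<lambda>k::nat. real k powr (real a / 2 * real s + \<bar>\<gamma>\<bar>) * exp (-\<tau> * real k))"
  define E where "E = 2 powr \<bar>\<gamma>\<bar> * \<beta> ^ s * exp (\<tau> * real s)"
  have cnn: "c k \<ge> 0" for k unfolding c_def using \<beta> by (rule scale_nonneg)
  have E0: "E \<ge> 0" using \<beta> by (simp add: E_def)
  have X: "summable X" unfolding X_def using a by (intro summable_powr_mult_exp_neg) (simp add: \<tau>_def)
  have large: "(\<Sum>k=s..n-s. c k * c (n - k)) \<le> (2 * E * suminf X) * c (n - s)" if n: "4 * s \<le> n" for n
  proof -
    have "(\<Sum>k=s..n-s. c k * c (n - k)) \<le> 2 * (\<Sum>k=s..n-s. if 2 * k \<le> n then c k * c (n - k) else 0)"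
      using cnn by (rule self_convolution_le_twice_half)
    also have "\<dots> \<le> 2 * (\<Sum>k=s..n-s. E * X k * c (n - s))"
      using scale_mult_scale_le[OF \<beta> s _ _ n] E0 cnn
      by (intro mult_left_mono sum_mono) (auto simp: c_def E_def X_def \<tau>_def)
    also have "\<dots> = 2 * E * (\<Sum>k=s..n-s. X k) * c (n - s)"
      by (simp add: sum_distrib_left sum_distrib_right mult_ac)
    also have "\<dots> \<le> 2 * E * suminf X * c (n - s)"
      using X E0 cnn by (intro mult_right_mono mult_left_mono sum_le_suminf) (auto simp: X_def)
    finally show ?thesis .
  qed
  have "c (n - s) > 0" if "2 * s \<le> n" for n
    unfolding c_def using \<beta> that s by (intro scale_pos) auto
  from eventually_bound_imp_bound[OF large this] show ?thesis by (simp add: c_def)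
qed

lemma scale_convolution_le_decay:
  assumes \<beta>: "\<beta> > 0" and a: "a > 0"
  shows "\<exists>D\<ge>0. \<forall>n. (\<Sum>k=1..n-1. scale a \<beta> \<gamma> k * scale a \<beta> \<gamma> (n - k))
                    \<le> D * scale a \<beta> \<gamma> n * real n powr (-(real a / 2))"
proof -
  obtain D where D: "D \<ge> 0" "\<And>n. n \<ge> 2 \<Longrightarrow> (\<Sum>k=1..n-1. scale a \<beta> \<gamma> k * scale a \<beta> \<gamma> (n - k)) \<le> D * scale a \<beta> \<gamma> (n - 1)"
    using scale_convolution_tail[OF \<beta> _ a, of 1 \<gamma>] by auto
  define K where "K = 2 powr \<bar>\<gamma>\<bar> / \<beta>"
  have "(\<Sum>k=1..n-1. scale a \<beta> \<gamma> k * scale a \<beta> \<gamma> (n - k)) \<le> D * K * scale a \<beta> \<gamma> n * real n powr (-(real a / 2))" for n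
  proof (cases "n \<ge> 2")
    case True
    have "scale a \<beta> \<gamma> (n - 1) \<le> K * scale a \<beta> \<gamma> n * real n powr (-(real a / 2))"
      unfolding K_def using scale_diff_le[OF \<beta>, of 1 n a \<gamma>] True by simp
    then have "D * scale a \<beta> \<gamma> (n - 1) \<le> D * (K * scale a \<beta> \<gamma> n * real n powr (-(real a / 2)))"
      using D(1) by (rule mult_left_mono)
    with D(2)[OF True] show ?thesis by (simp add: mult.assoc)
  next
    case False
    then have "{1..n-1} = {}" by auto
    with D \<beta> scale_nonneg[OF \<beta>, of a \<gamma> n] show ?thesis by (simp add: K_def)
  qed
  with D \<beta> show ?thesis by (intro exI[of _ "D * K"]) (auto simp: K_def)
qed

lemma scale_convolution_le:
  assumes \<beta>: "\<beta> > 0" and a: "a > 0"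
  shows "\<exists>D\<ge>0. \<forall>n. (\<Sum>k=1..n-1. scale a \<beta> \<gamma> k * scale a \<beta> \<gamma> (n - k)) \<le> D * scale a \<beta> \<gamma> n"
proof -
  obtain D where D: "D \<ge> 0" "\<And>n. (\<Sum>k=1..n-1. scale a \<beta> \<gamma> k * scale a \<beta> \<gamma> (n - k))
                                    \<le> D * scale a \<beta> \<gamma> n * real n powr (-(real a / 2))"
    using scale_convolution_le_decay[OF \<beta> a] by blast
  have "D * scale a \<beta> \<gamma> n * real n powr (-(real a / 2)) \<le> D * scale a \<beta> \<gamma> n" for n
  proof (cases "n = 0")
    case False
    then have "1 \<le> real n powr (real a / 2)" by (intro ge_one_powr_ge_zero) auto
    then have "real n powr (-(real a / 2)) \<le> 1" by (simp add: powr_minus_divide divide_le_eq)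
    with D(1) scale_nonneg[OF \<beta>, of a \<gamma> n] show ?thesis by (intro mult_left_le) auto
  qed (simp add: scale_def)
  with D show ?thesis by (meson order.trans)
qed

lemma scale_convolution_small:
  assumes \<beta>: "\<beta> > 0" and a: "a > 0" and \<epsilon>: "\<epsilon> > 0"
  shows "\<exists>N. \<forall>n\<ge>N. (\<Sum>k=1..n-1. scale a \<beta> \<gamma> k * scale a \<beta> \<gamma> (n - k)) \<le> \<epsilon> * scale a \<beta> \<gamma> n"
proof -
  obtain D where D: "D \<ge> 0" "\<And>n. (\<Sum>k=1..n-1. scale a \<beta> \<gamma> k * scale a \<beta> \<gamma> (n - k))
                                    \<le> D * scale a \<beta> \<gamma> n * real n powr (-(real a / 2))"
    using scale_convolution_le_decay[OF \<beta> a] by blast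
  have "((\<lambda>n::nat. D * real n powr (-(real a / 2))) \<longlongrightarrow> 0) sequentially"
    using a by (intro tendsto_mult_right_zero tendsto_neg_powr filterlim_real_sequentially) auto
  then have "eventually (\<lambda>n. D * real n powr (-(real a / 2)) < \<epsilon>) sequentially"
    using \<epsilon> by (rule order_tendstoD(2))
  then obtain N where N: "\<And>n. n \<ge> N \<Longrightarrow> D * real n powr (-(real a / 2)) < \<epsilon>"
    unfolding eventually_sequentially by blast
  have "D * scale a \<beta> \<gamma> n * real n powr (-(real a / 2)) \<le> \<epsilon> * scale a \<beta> \<gamma> n" if "n \<ge> N" for n
  proof -
    have "(D * real n powr (-(real a / 2))) * scale a \<beta> \<gamma> n \<le> \<epsilon> * scale a \<beta> \<gamma> n"
      using N[OF that] scale_nonneg[OF \<beta>, of a \<gamma> n] by (intro mult_right_mono) auto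
    then show ?thesis by (simp add: mult_ac)
  qed
  with D show ?thesis by (meson order.trans)
qed

section \<open>Majorant series and geometric series\<close>

definition fps_majorant :: "real fps \<Rightarrow> 'a::real_normed_field fps \<Rightarrow> bool" where
  "fps_majorant G F \<longleftrightarrow> (\<forall>i. norm (fps_nth F i) \<le> fps_nth G i)"

lemma fps_majorantD: "fps_majorant G F \<Longrightarrow> norm (fps_nth F i) \<le> fps_nth G i"
  by (simp add: fps_majorant_def)

lemma fps_majorant_nonneg: "fps_majorant G F \<Longrightarrow> 0 \<le> fps_nth G i"
  using fps_majorantD[of G F i] norm_ge_zero[of "fps_nth F i"] by linarith

lemma fps_majorant_self: "(\<And>i. fps_nth G i \<ge> 0) \<Longrightarrow> fps_majorant G G"
  by (simp add: fps_majorant_def)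

lemma fps_majorant_0: "fps_majorant 0 (0 :: 'a::real_normed_field fps)"
  by (simp add: fps_majorant_def)

lemma fps_majorant_1: "fps_majorant 1 (1 :: 'a::real_normed_field fps)"
  by (simp add: fps_majorant_def)

lemma fps_majorant_add:
  fixes F F' :: "'a::real_normed_field fps"
  assumes "fps_majorant G F" "fps_majorant G' F'"
  shows "fps_majorant (G + G') (F + F')"
  using assms unfolding fps_majorant_def
  by (auto intro: order.trans[OF norm_triangle_ineq] add_mono)

lemma fps_majorant_mult:
  fixes F F' :: "'a::real_normed_field fps"
  assumes "fps_majorant G F" "fps_majorant G' F'"
  shows "fps_majorant (G * G') (F * F')"
  unfolding fps_majorant_def
proof
  fix n
  have "norm (fps_nth (F * F') n) \<le> (\<Sum>i=0..n. norm (fps_nth F i * fps_nth F' (n - i)))"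
    unfolding fps_mult_nth by (rule norm_sum)
  also have "\<dots> \<le> (\<Sum>i=0..n. fps_nth G i * fps_nth G' (n - i))"
    unfolding norm_mult using assms
    by (intro sum_mono mult_mono fps_majorantD) (auto intro: fps_majorant_nonneg)
  finally show "norm (fps_nth (F * F') n) \<le> fps_nth (G * G') n"
    by (simp add: fps_mult_nth)
qed

lemma fps_majorant_power:
  fixes F :: "'a::real_normed_field fps"
  assumes "fps_majorant G F"
  shows "fps_majorant (G ^ m) (F ^ m)"
  by (induction m) (auto intro: fps_majorant_mult fps_majorant_1 assms)

lemma fps_majorant_of_nat_mult:
  fixes F :: "'a::real_normed_field fps"
  assumes "fps_majorant G F"
  shows "fps_majorant (of_nat m * G) (of_nat m * F)"
  using assms unfolding fps_majorant_def
  by (auto simp: fps_of_nat[symmetric] norm_mult intro: mult_left_mono)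

lemma fps_nth_power_nonneg:
  fixes F :: "real fps"
  assumes "\<And>k. fps_nth F k \<ge> 0"
  shows "fps_nth (F ^ i) n \<ge> 0"
  using fps_majorant_nonneg[OF fps_majorant_power[OF fps_majorant_self[OF assms]]] .

lemma fps_nth_power_eq_0:
  fixes F :: "'a::comm_ring_1 fps"
  assumes "fps_nth F 0 = 0" "n < i"
  shows "fps_nth (F ^ i) n = 0"
  using startsby_zero_power_prefix[OF assms(1)] assms(2) by blast

lemma fps_nth_mult_eq_0:
  fixes Q Y :: "'a::comm_ring_1 fps"
  assumes "\<And>k. k < s \<Longrightarrow> fps_nth Q k = 0" "t < s"
  shows "fps_nth (Q * Y) t = 0"
  using assms by (auto simp: fps_mult_nth intro!: sum.neutral)

lemma fps_nth_mult_cong: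
  fixes A F G :: "'a::comm_ring_1 fps"
  assumes "\<And>i. i \<le> n \<Longrightarrow> fps_nth F i = fps_nth G i"
  shows "fps_nth (A * F) n = fps_nth (A * G) n"
  using assms by (auto simp: fps_mult_nth intro!: sum.cong)

lemma fps_nth_power_cong:
  fixes F G :: "'a::comm_ring_1 fps"
  assumes "\<And>i. i \<le> n \<Longrightarrow> fps_nth F i = fps_nth G i"
  shows "fps_nth (F ^ m) n = fps_nth (G ^ m) n"
  using assms
proof (induction m arbitrary: n)
  case (Suc m)
  then show ?case by (auto simp: fps_mult_nth intro!: sum.cong)
qed simp

lemma fps_nth_compose_cong:
  fixes F G H :: "'a::comm_ring_1 fps"
  assumes "\<And>i. i \<le> n \<Longrightarrow> fps_nth F i = fps_nth G i"
  shows "fps_nth (H oo F) n = fps_nth (H oo G) n"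
  using fps_nth_power_cong[OF assms] by (simp add: fps_compose_nth)

lemma fps_nth_inverse_one_minus:
  fixes F :: "'a::field fps"
  assumes F0: "fps_nth F 0 = 0" and n: "n \<le> N"
  shows "fps_nth (inverse (1 - F)) n = fps_nth (\<Sum>i\<le>N. F ^ i) n"
proof -
  have "(\<Sum>i\<le>N. F ^ i) = inverse (1 - F) * ((1 - F) * (\<Sum>i=0..N. F ^ i))"
    using F0 by (simp add: atLeast0AtMost mult.assoc[symmetric] inverse_mult_eq_1)
  also have "\<dots> = inverse (1 - F) - F ^ Suc N * inverse (1 - F)"
    by (subst sum_gp_multiplied) (simp_all add: algebra_simps)
  finally have "(\<Sum>i\<le>N. F ^ i) = inverse (1 - F) - F ^ Suc N * inverse (1 - F)" .
  moreover have "fps_nth (F ^ Suc N * inverse (1 - F)) n = 0"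
    using n by (intro fps_nth_mult_eq_0[of "Suc N"] fps_nth_power_eq_0[OF F0]) auto
  ultimately show ?thesis by simp
qed

lemma fps_nth_inverse_one_minus_nonneg:
  fixes F :: "real fps"
  assumes "fps_nth F 0 = 0" "\<And>k. fps_nth F k \<ge> 0"
  shows "fps_nth (inverse (1 - F)) n \<ge> 0"
  unfolding fps_nth_inverse_one_minus[OF assms(1) order.refl] fps_sum_nth
  by (intro sum_nonneg fps_nth_power_nonneg assms(2))

lemma fps_nth_inverse_one_minus_rec:
  fixes F :: "'a::field fps"
  assumes F0: "fps_nth F 0 = 0" and n: "n \<ge> 1"
  shows "fps_nth (inverse (1 - F)) n
           = (\<Sum>k=1..n-1. fps_nth F k * fps_nth (inverse (1 - F)) (n - k)) + fps_nth F n"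
proof -
  define S where "S = inverse (1 - F)"
  have "(1 - F) * S = 1"
    unfolding S_def using F0 by (intro inverse_mult_eq_1') simp
  then have "S = 1 + F * S" by (simp add: algebra_simps)
  then have "fps_nth S n = fps_nth (1 + F * S) n" by (rule arg_cong)
  also have "\<dots> = (\<Sum>k=0..n. fps_nth F k * fps_nth S (n - k))"
    using n by (simp add: fps_mult_nth)
  also have "\<dots> = (\<Sum>k=1..n. fps_nth F k * fps_nth S (n - k))"
    using F0 by (simp add: sum.atLeast_Suc_atMost)
  also have "\<dots> = (\<Sum>k=1..n-1. fps_nth F k * fps_nth S (n - k)) + fps_nth F n"
    using n F0 by (cases n) (auto simp: S_def)
  finally show ?thesis by (simp add: S_def)
qed

lemma fps_nth_inverse_one_minus_le_step:
  fixes F :: "real fps" and c :: "nat \<Rightarrow> real"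
  assumes F0: "fps_nth F 0 = 0" and Fnn: "\<And>k. fps_nth F k \<ge> 0" and FC: "\<And>k. fps_nth F k \<le> C * c k"
    and cnn: "\<And>k. c k \<ge> 0" and C: "C > 0" and D: "D \<ge> 2 * C"
    and conv: "(\<Sum>k=1..n-1. c k * c (n - k)) \<le> 1 / (2 * C) * c n"
    and IH: "\<And>k. 1 \<le> k \<Longrightarrow> k < n \<Longrightarrow> fps_nth (inverse (1 - F)) k \<le> D * c k"
    and n: "n \<ge> 1"
  shows "fps_nth (inverse (1 - F)) n \<le> D * c n"
proof -
  define S where "S = inverse (1 - F)"
  have "(\<Sum>k=1..n-1. fps_nth F k * fps_nth S (n - k)) \<le> (\<Sum>k=1..n-1. (C * c k) * (D * c (n - k)))"
  proof (rule sum_mono)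
    fix k assume k: "k \<in> {1..n-1}"
    have "fps_nth F k * fps_nth S (n - k) \<le> fps_nth F k * (D * c (n - k))"
      using IH[of "n - k"] k Fnn[of k] by (intro mult_left_mono) (auto simp: S_def)
    also have "\<dots> \<le> (C * c k) * (D * c (n - k))"
      using FC[of k] D C cnn[of "n - k"] by (intro mult_right_mono) auto
    finally show "fps_nth F k * fps_nth S (n - k) \<le> (C * c k) * (D * c (n - k))" .
  qed
  also have "\<dots> = C * D * (\<Sum>k=1..n-1. c k * c (n - k))"
    by (simp add: sum_distrib_left mult_ac)
  also have "\<dots> \<le> C * D * (1 / (2 * C) * c n)"
    using conv C D by (intro mult_left_mono) auto
  also have "\<dots> = D / 2 * c n" using C by (simp add: field_simps)
  finally have "(\<Sum>k=1..n-1. fps_nth F k * fps_nth S (n - k)) \<le> D / 2 * c n" .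
  moreover have "fps_nth F n \<le> D / 2 * c n"
    using FC[of n] D cnn[of n] mult_right_mono[of C "D / 2" "c n"] by linarith
  ultimately show ?thesis
    using fps_nth_inverse_one_minus_rec[OF F0 n] by (simp add: S_def field_simps)
qed

text \<open>In the recursion for 1/(1 - F) the convolution term is at most C D times the
  self-convolution of the scale, which is below c_n / (2C) for large n; small n are absorbed into D.\<close>

lemma inverse_one_minus_scale_bound:
  fixes F :: "real fps"
  assumes \<beta>: "\<beta> > 0" and a: "a > 0" and F0: "fps_nth F 0 = 0"
    and Fnn: "\<And>k. fps_nth F k \<ge> 0" and FC: "\<And>k. fps_nth F k \<le> C * scale a \<beta> \<gamma> k"
  shows "\<exists>D. \<forall>n\<ge>1. fps_nth (inverse (1 - F)) n \<le> D * scale a \<beta> \<gamma> n"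
proof -
  define c where "c = scale a \<beta> \<gamma>"
  define C' where "C' = max C 1"
  have cnn: "c k \<ge> 0" for k unfolding c_def using \<beta> by (rule scale_nonneg)
  have cpos: "\<And>n. 1 \<le> n \<Longrightarrow> c n > 0" unfolding c_def using \<beta> by (rule scale_pos)
  have C': "C' > 0" by (simp add: C'_def)
  have FC': "fps_nth F k \<le> C' * c k" for k
  proof -
    have "C * c k \<le> C' * c k" unfolding C'_def using cnn by (intro mult_right_mono) auto
    with FC[of k] show ?thesis by (simp add: c_def)
  qed
  obtain N0 where N0: "\<And>n. n \<ge> N0 \<Longrightarrow> (\<Sum>k=1..n-1. c k * c (n - k)) \<le> 1 / (2 * C') * c n"
    using scale_convolution_small[OF \<beta> a, of "1 / (2 * C')" \<gamma>] C' unfolding c_def by auto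
  obtain D where D: "D \<ge> 2 * C'" "\<forall>n. 1 \<le> n \<longrightarrow> n < N0 \<longrightarrow> fps_nth (inverse (1 - F)) n \<le> D * c n"
    using finite_range_bound[of 1 N0 c "2 * C'" "fps_nth (inverse (1 - F))", OF cpos] by blast
  have "fps_nth (inverse (1 - F)) n \<le> D * c n" if "n \<ge> 1" for n
    using that
  proof (induction n rule: less_induct)
    case (less n)
    show ?case
    proof (cases "n < N0")
      case False
      then have conv: "(\<Sum>k=1..n-1. c k * c (n - k)) \<le> 1 / (2 * C') * c n" by (intro N0) simp
      have "fps_nth (inverse (1 - F)) k \<le> D * c k" if "1 \<le> k" "k < n" for k
        using less.IH that by blast
      from fps_nth_inverse_one_minus_le_step[OF F0 Fnn FC' cnn C' D(1) conv this less.prems]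
      show ?thesis .
    qed (use D less.prems in auto)
  qed
  then show ?thesis unfolding c_def by blast
qed

lemma fps_nth_geometric_bound:
  fixes G :: "complex fps"
  assumes "fps_conv_radius G > 0"
  shows "\<exists>M lam. M \<ge> 0 \<and> lam \<ge> 0 \<and> (\<forall>m. norm (fps_nth G m) \<le> M * lam ^ m)"
proof -
  obtain \<rho> where \<rho>: "0 < ereal \<rho>" "ereal \<rho> < fps_conv_radius G"
    using ereal_dense2[OF assms] by blast
  have \<rho>0: "\<rho> > 0" using \<rho>(1) by simp
  have "summable (\<lambda>m. norm (fps_nth G m * complex_of_real \<rho> ^ m))"
    using \<rho> \<rho>0 by (intro norm_summable_fps) simp
  then have "Bseq (\<lambda>m. norm (fps_nth G m * complex_of_real \<rho> ^ m))"
    by (intro convergent_imp_Bseq convergentI[OF summable_LIMSEQ_zero])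
  then obtain M where M: "M > 0" "\<And>m. norm (fps_nth G m) * \<rho> ^ m \<le> M"
    using \<rho>0 by (auto elim!: BseqE simp: norm_mult norm_power)
  have "norm (fps_nth G m) \<le> M * (1 / \<rho>) ^ m" for m
    using M(2)[of m] \<rho>0 by (simp add: field_simps power_divide)
  with M(1) \<rho>0 show ?thesis by (intro exI[of _ M] exI[of _ "1 / \<rho>"]) auto
qed

lemma fps_compose_scale_bound:
  fixes G F :: "'a::real_normed_field fps"
  assumes \<beta>: "\<beta> > 0" and a: "a > 0" and M: "M \<ge> 0" and lam: "lam \<ge> 0"
    and G: "\<And>m. norm (fps_nth G m) \<le> M * lam ^ m"
    and F0: "fps_nth F 0 = 0" and K: "K \<ge> 0" and F: "\<And>k. norm (fps_nth F k) \<le> K * scale a \<beta> \<gamma> k"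
  shows "\<exists>D. \<forall>k\<ge>1. norm (fps_nth (G oo F) k) \<le> D * scale a \<beta> \<gamma> k"
proof -
  define c where "c = scale a \<beta> \<gamma>"
  have cnn: "c k \<ge> 0" for k unfolding c_def using \<beta> by (rule scale_nonneg)
  define Ch where "Ch = Abs_fps (\<lambda>k. K * c k)"
  define \<Phi> where "\<Phi> = fps_const lam * Ch"
  have majF: "fps_majorant Ch F" using F by (simp add: fps_majorant_def Ch_def c_def)
  have \<Phi>_nth: "fps_nth \<Phi> k = lam * K * c k" for k by (simp add: \<Phi>_def Ch_def)
  have \<Phi>0: "fps_nth \<Phi> 0 = 0" by (simp add: \<Phi>_nth c_def scale_def)
  obtain D where D: "\<And>n. n \<ge> 1 \<Longrightarrow> fps_nth (inverse (1 - \<Phi>)) n \<le> D * c n"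
    using inverse_one_minus_scale_bound[OF \<beta> a \<Phi>0, of "lam * K" \<gamma>] lam K cnn
    unfolding c_def by (auto simp: \<Phi>_nth c_def)
  have "norm (fps_nth (G oo F) k) \<le> M * D * c k" if k: "k \<ge> 1" for k
  proof -
    have "norm (fps_nth (G oo F) k) \<le> (\<Sum>m=0..k. norm (fps_nth G m) * norm (fps_nth (F ^ m) k))"
      unfolding fps_compose_nth by (rule order.trans[OF norm_sum]) (simp add: norm_mult)
    also have "\<dots> \<le> (\<Sum>m=0..k. (M * lam ^ m) * fps_nth (Ch ^ m) k)"
      using M lam
      by (intro sum_mono mult_mono G fps_majorantD[OF fps_majorant_power[OF majF]]) auto
    also have "\<dots> = M * fps_nth (\<Sum>m\<le>k. \<Phi> ^ m) k"
      by (simp add: \<Phi>_def power_mult_distrib fps_const_power fps_sum_nth atLeast0AtMost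
          sum_distrib_left mult_ac)
    also have "\<dots> = M * fps_nth (inverse (1 - \<Phi>)) k"
      using fps_nth_inverse_one_minus[OF \<Phi>0 order.refl] by simp
    also have "\<dots> \<le> M * (D * c k)" using D[OF k] M by (intro mult_left_mono) auto
    finally show ?thesis by simp
  qed
  then show ?thesis unfolding c_def by blast
qed

section \<open>Bender's decomposition of a composition\<close>

primrec second_order_rem :: "'a::comm_ring_1 \<Rightarrow> 'a \<Rightarrow> nat \<Rightarrow> 'a" where
  "second_order_rem P B 0 = 0"
| "second_order_rem P B (Suc m) = B * second_order_rem P B m + of_nat m * P ^ (m - 1)"

lemma power_add_second_order:
  fixes P Q :: "'a::comm_ring_1"
  shows "(P + Q) ^ m = P ^ m + of_nat m * P ^ (m - 1) * Q + Q ^ 2 * second_order_rem P (P + Q) m"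
proof (induction m)
  case (Suc m)
  have PP: "of_nat m * (P * P ^ (m - 1)) = of_nat m * P ^ m"
    by (cases m) auto
  have "(P + Q) ^ Suc m = (P + Q) * (P ^ m + of_nat m * P ^ (m - 1) * Q + Q ^ 2 * second_order_rem P (P + Q) m)"
    using Suc by simp
  also have "\<dots> = P ^ Suc m + of_nat (Suc m) * P ^ m * Q
                   + Q ^ 2 * ((P + Q) * second_order_rem P (P + Q) m + of_nat m * P ^ (m - 1))"
    using PP by (simp add: algebra_simps power2_eq_square)
  finally show ?case by simp
qed simp

lemma second_order_rem_same: "second_order_rem x x m = of_nat (m choose 2) * x ^ (m - 2)"
proof (induction m)
  case (Suc m)
  show ?case
  proof (cases "m \<ge> 2")
    case True
    have "Suc (m - 2) = m - 1" using True by simp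
    then have "x * x ^ (m - 2) = x ^ (m - 1)"
      using power_Suc[of x "m - 2"] by simp
    moreover have "Suc m choose 2 = (m choose 2) + m"
      by (simp add: numeral_2_eq_2 choose_one)
    ultimately show ?thesis using True by (simp add: Suc algebra_simps mult.left_commute[of x])
  next
    case False
    then consider "m = 0" | "m = 1" by linarith
    then show ?thesis by cases (simp_all add: numeral_2_eq_2)
  qed
qed (simp add: numeral_2_eq_2)

lemma fps_majorant_second_order_rem:
  fixes P B :: "'a::real_normed_field fps"
  assumes "fps_majorant G P" "fps_majorant G B"
  shows "fps_majorant (second_order_rem G G m) (second_order_rem P B m)"
  by (induction m)
     (simp_all add: assms fps_majorant_0 fps_majorant_add fps_majorant_mult fps_majorant_of_nat_mult
       fps_majorant_power)

lemma fps_compose_linear_term: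
  fixes H P Q :: "'a::comm_ring_1 fps"
  assumes P0: "fps_nth P 0 = 0" and Q0: "fps_nth Q 0 = 0"
  shows "(\<Sum>m=0..n. fps_nth H m * fps_nth (of_nat m * P ^ (m - 1) * Q) n)
           = (\<Sum>k=0..n. fps_nth (fps_deriv H oo P) k * fps_nth Q (n - k))"
proof -
  have "(\<Sum>m=0..n. fps_nth H m * fps_nth (of_nat m * P ^ (m - 1) * Q) n)
          = (\<Sum>m=0..n. \<Sum>k=0..n. of_nat m * fps_nth H m * fps_nth (P ^ (m - 1)) k * fps_nth Q (n - k))"
  proof -
    have "fps_nth (of_nat m * P ^ (m - 1) * Q) n
            = of_nat m * (\<Sum>k=0..n. fps_nth (P ^ (m - 1)) k * fps_nth Q (n - k))" for m
      unfolding mult.assoc fps_of_nat[symmetric] fps_mult_left_const_nth by (simp add: fps_mult_nth)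
    then show ?thesis by (simp add: sum_distrib_left mult_ac)
  qed
  also have "\<dots> = (\<Sum>k=0..n. \<Sum>m=0..n. of_nat m * fps_nth H m * fps_nth (P ^ (m - 1)) k * fps_nth Q (n - k))"
    by (rule sum.swap)
  also have "\<dots> = (\<Sum>k=0..n. fps_nth (fps_deriv H oo P) k * fps_nth Q (n - k))"
  proof (rule sum.cong[OF refl])
    fix k assume k: "k \<in> {0..n}"
    show "(\<Sum>m=0..n. of_nat m * fps_nth H m * fps_nth (P ^ (m - 1)) k * fps_nth Q (n - k))
            = fps_nth (fps_deriv H oo P) k * fps_nth Q (n - k)"
    proof (cases "k = n")
      case False
      with k obtain n' where n': "n = Suc n'" "k \<le> n'" by (cases n) auto
      have "(\<Sum>m=0..n. of_nat m * fps_nth H m * fps_nth (P ^ (m - 1)) k)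
              = (\<Sum>i=0..n'. of_nat (Suc i) * fps_nth H (Suc i) * fps_nth (P ^ i) k)"
        unfolding n' by (subst sum.atLeast0_atMost_Suc_shift) simp
      also have "\<dots> = (\<Sum>i=0..k. of_nat (Suc i) * fps_nth H (Suc i) * fps_nth (P ^ i) k)"
        using n' fps_nth_power_eq_0[OF P0] by (intro sum.mono_neutral_right) auto
      also have "\<dots> = fps_nth (fps_deriv H oo P) k"
        by (simp add: fps_compose_nth algebra_simps)
      finally show ?thesis by (simp add: sum_distrib_right[symmetric])
    qed (simp add: Q0)
  qed
  finally show ?thesis .
qed

lemma fps_compose_add_split:
  fixes H P Q :: "'a::comm_ring_1 fps"
  assumes P0: "fps_nth P 0 = 0" and Q0: "fps_nth Q 0 = 0"
  shows "fps_nth (H oo (P + Q)) n = fps_nth (H oo P) n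
           + (\<Sum>k=0..n. fps_nth (fps_deriv H oo P) k * fps_nth Q (n - k))
           + (\<Sum>m=0..n. fps_nth H m * fps_nth (Q ^ 2 * second_order_rem P (P + Q) m) n)"
proof -
  have "fps_nth (H oo (P + Q)) n = (\<Sum>m=0..n. fps_nth H m * fps_nth ((P + Q) ^ m) n)"
    by (simp add: fps_compose_nth)
  also have "\<dots> = fps_nth (H oo P) n
                   + (\<Sum>m=0..n. fps_nth H m * fps_nth (of_nat m * P ^ (m - 1) * Q) n)
                   + (\<Sum>m=0..n. fps_nth H m * fps_nth (Q ^ 2 * second_order_rem P (P + Q) m) n)"
    unfolding power_add_second_order by (simp add: fps_compose_nth sum.distrib algebra_simps)
  finally show ?thesis
    unfolding fps_compose_linear_term[OF P0 Q0] .
qed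

lemma fps_mult_scale_bound:
  fixes F G :: "real fps" and c :: "nat \<Rightarrow> real"
  assumes Fnn: "\<And>k. fps_nth F k \<ge> 0" and Gnn: "\<And>k. fps_nth G k \<ge> 0"
    and F0: "fps_nth F 0 \<le> A" and G0: "fps_nth G 0 \<le> A'"
    and Fk: "\<And>k. k \<ge> 1 \<Longrightarrow> fps_nth F k \<le> A * c k"
    and Gk: "\<And>k. k \<ge> 1 \<Longrightarrow> fps_nth G k \<le> A' * c k"
    and cnn: "\<And>k. c k \<ge> 0"
    and conv: "(\<Sum>k=1..n-1. c k * c (n - k)) \<le> D * c n"
    and n: "n \<ge> 1"
  shows "fps_nth (F * G) n \<le> A * A' * (2 + D) * c n"
proof -
  have A: "A \<ge> 0" "A' \<ge> 0" using F0 G0 Fnn[of 0] Gnn[of 0] by linarith+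
  have "fps_nth (F * G) n
          = fps_nth F 0 * fps_nth G n + (\<Sum>k=1..n-1. fps_nth F k * fps_nth G (n - k)) + fps_nth F n * fps_nth G 0"
    using n by (cases n) (simp_all add: fps_mult_nth sum.atLeast_Suc_atMost)
  also have "(\<Sum>k=1..n-1. fps_nth F k * fps_nth G (n - k)) \<le> (\<Sum>k=1..n-1. (A * c k) * (A' * c (n - k)))"
    using Fnn Gnn A cnn by (intro sum_mono mult_mono Fk Gk) auto
  also have "\<dots> = A * A' * (\<Sum>k=1..n-1. c k * c (n - k))"
    by (simp add: sum_distrib_left mult_ac)
  also have "\<dots> \<le> A * A' * (D * c n)"
    using conv A by (intro mult_left_mono) auto
  also have "fps_nth F 0 * fps_nth G n \<le> A * (A' * c n)"
    using F0 Gk[OF n] Fnn Gnn A by (intro mult_mono) auto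
  also have "fps_nth F n * fps_nth G 0 \<le> (A * c n) * A'"
    using G0 Fk[OF n] Fnn Gnn A cnn by (intro mult_mono) auto
  finally show ?thesis by (simp add: algebra_simps)
qed

lemma fps_mult_tail_bound:
  fixes Q Z :: "real fps" and c :: "nat \<Rightarrow> real"
  assumes Qnn: "\<And>k. fps_nth Q k \<ge> 0" and Znn: "\<And>k. fps_nth Z k \<ge> 0"
    and Qs: "\<And>k. k < s \<Longrightarrow> fps_nth Q k = 0" and Zs: "\<And>k. k < s \<Longrightarrow> fps_nth Z k = 0"
    and Qk: "\<And>k. fps_nth Q k \<le> K * c k" and Zk: "\<And>k. k \<ge> 1 \<Longrightarrow> fps_nth Z k \<le> K' * c k"
    and cnn: "\<And>k. c k \<ge> 0" and s: "s \<ge> 1" and K: "K \<ge> 0" "K' \<ge> 0"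
    and conv: "(\<Sum>k=s..n-s. c k * c (n - k)) \<le> D * c (n - s)"
    and n: "n \<ge> 2 * s"
  shows "fps_nth (Q * Z) n \<le> K * K' * D * c (n - s)"
proof -
  have "fps_nth (Q * Z) n = (\<Sum>k=s..n-s. fps_nth Q k * fps_nth Z (n - k))"
    unfolding fps_mult_nth using Qs Zs n by (intro sum.mono_neutral_right) auto
  also have "\<dots> \<le> (\<Sum>k=s..n-s. (K * c k) * (K' * c (n - k)))"
    using Qnn Znn K cnn n s by (intro sum_mono mult_mono Qk Zk) auto
  also have "\<dots> = K * K' * (\<Sum>k=s..n-s. c k * c (n - k))"
    by (simp add: sum_distrib_left mult_ac)
  also have "\<dots> \<le> K * K' * (D * c (n - s))"
    using conv K by (intro mult_left_mono) auto
  finally show ?thesis by (simp add: mult_ac)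
qed

lemma linear_tail_bound:
  fixes G Q :: "'a::real_normed_field fps" and c :: "nat \<Rightarrow> real"
  assumes cnn: "\<And>k. c k \<ge> 0" and s: "s \<ge> 1" and D: "D \<ge> 0" and K: "K \<ge> 0"
    and Gb: "\<And>k. k \<ge> 1 \<Longrightarrow> norm (fps_nth G k) \<le> D * c k"
    and Qlow: "\<And>k. k < s \<Longrightarrow> fps_nth Q k = 0" and Qb: "\<And>k. norm (fps_nth Q k) \<le> K * c k"
    and conv: "(\<Sum>k=s..n-s. c k * c (n - k)) \<le> Ds * c (n - s)" and n: "n \<ge> 2 * s"
  shows "norm (\<Sum>k=s..n. fps_nth G k * fps_nth Q (n - k)) \<le> D * K * Ds * c (n - s)"
proof -
  define Gh where "Gh = Abs_fps (\<lambda>k. if k < s then 0 else D * c k)"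
  define Qh where "Qh = Abs_fps (\<lambda>k. if k < s then 0 else K * c k)"
  have Ghnn: "fps_nth Gh k \<ge> 0" and Qhnn: "fps_nth Qh k \<ge> 0" for k
    using D K cnn by (simp_all add: Gh_def Qh_def)
  have "norm (\<Sum>k=s..n. fps_nth G k * fps_nth Q (n - k))
          \<le> (\<Sum>k=s..n. norm (fps_nth G k) * norm (fps_nth Q (n - k)))"
    by (rule order.trans[OF norm_sum]) (simp add: norm_mult)
  also have "\<dots> \<le> (\<Sum>k=s..n. fps_nth Gh k * fps_nth Qh (n - k))"
    using s Gb Qb Qlow Ghnn D cnn by (intro sum_mono mult_mono) (auto simp: Gh_def Qh_def)
  also have "\<dots> \<le> fps_nth (Gh * Qh) n"
    unfolding fps_mult_nth using Ghnn Qhnn by (intro sum_mono2) auto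
  also have "\<dots> \<le> D * K * Ds * c (n - s)"
    using Ghnn Qhnn cnn s D K n conv
    by (intro fps_mult_tail_bound[where c = c]) (auto simp: Gh_def Qh_def)
  finally show ?thesis .
qed

lemma power_mult_choose_two_le:
  fixes lam :: real
  assumes lam: "lam \<ge> 0" and m: "m \<ge> 2"
  shows "lam ^ m * of_nat (m choose 2) \<le> (2 * lam) ^ 2 * (2 * lam) ^ (m - 2)"
proof -
  have "real (m choose 2) \<le> 2 ^ m"
    using binomial_le_pow2[of m 2] by (simp add: of_nat_le_iff[symmetric])
  then have "lam ^ m * of_nat (m choose 2) \<le> lam ^ m * 2 ^ m"
    using lam by (intro mult_left_mono) auto
  also have "\<dots> = (2 * lam) ^ (2 + (m - 2))"
    using m by (subst le_add_diff_inverse) (simp_all add: power_mult_distrib)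
  finally show ?thesis by (simp only: power_add)
qed

lemma fps_nth_mult_second_order_rem_same:
  "fps_nth (A * second_order_rem G G m) n = of_nat (m choose 2) * fps_nth (A * G ^ (m - 2)) n"
proof -
  have "A * second_order_rem G G m = fps_const (of_nat (m choose 2)) * (A * G ^ (m - 2))"
    unfolding second_order_rem_same fps_of_nat by (simp add: mult_ac)
  then show ?thesis by (simp only: fps_mult_left_const_nth)
qed

lemma fps_nth_mult_inverse_one_minus_cmult:
  fixes A G :: "'a::field fps"
  assumes "fps_nth G 0 = 0"
  shows "fps_nth (A * inverse (1 - fps_const c * G)) n = (\<Sum>j=0..n. c ^ j * fps_nth (A * G ^ j) n)"
proof -
  have "fps_nth (A * inverse (1 - fps_const c * G)) n = fps_nth (A * (\<Sum>j\<le>n. (fps_const c * G) ^ j)) n"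
    using assms by (intro fps_nth_mult_cong fps_nth_inverse_one_minus) auto
  also have "\<dots> = (\<Sum>j=0..n. c ^ j * fps_nth (A * G ^ j) n)"
    by (simp add: sum_distrib_left fps_sum_nth atLeast0AtMost power_mult_distrib fps_const_power
        mult.left_commute[of A])
  finally show ?thesis .
qed

lemma quadratic_term_majorant:
  fixes H P B Q :: "'a::real_normed_field fps"
  assumes M: "M \<ge> 0" and lam: "lam \<ge> 0" and Hb: "\<And>m. norm (fps_nth H m) \<le> M * lam ^ m"
    and P: "fps_majorant G P" and B: "fps_majorant G B" and Q: "fps_majorant Gq Q"
    and G0: "fps_nth G 0 = 0"
  shows "norm (\<Sum>m=0..n. fps_nth H m * fps_nth (Q ^ 2 * second_order_rem P B m) n)
           \<le> M * (2 * lam) ^ 2 * fps_nth (Gq ^ 2 * inverse (1 - fps_const (2 * lam) * G)) n"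
proof -
  define f where "f = (\<lambda>j. fps_nth (Gq ^ 2 * G ^ j) n)"
  define h where "h = (\<lambda>m. if m < 2 then 0 else M * (2 * lam) ^ 2 * ((2 * lam) ^ (m - 2) * f (m - 2)))"
  have Gnn: "fps_nth G k \<ge> 0" and Gqnn: "fps_nth Gq k \<ge> 0" for k
    using P Q by (auto intro: fps_majorant_nonneg)
  have fnn: "f j \<ge> 0" for j
    unfolding f_def using fps_majorant_mult[OF fps_majorant_power fps_majorant_power, OF
        fps_majorant_self fps_majorant_self, of Gq G 2 j] Gnn Gqnn
    by (blast intro: fps_majorant_nonneg)
  have maj: "fps_majorant (Gq ^ 2 * second_order_rem G G m) (Q ^ 2 * second_order_rem P B m)" for m
    by (intro fps_majorant_mult fps_majorant_power fps_majorant_second_order_rem P B Q)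
  have "norm (\<Sum>m=0..n. fps_nth H m * fps_nth (Q ^ 2 * second_order_rem P B m) n)
          \<le> (\<Sum>m=0..n. norm (fps_nth H m) * norm (fps_nth (Q ^ 2 * second_order_rem P B m) n))"
    by (rule order.trans[OF norm_sum]) (simp add: norm_mult)
  also have "\<dots> \<le> (\<Sum>m=0..n. M * lam ^ m * fps_nth (Gq ^ 2 * second_order_rem G G m) n)"
    using M lam by (intro sum_mono mult_mono Hb fps_majorantD[OF maj] fps_majorant_nonneg[OF maj]) auto
  also have "\<dots> \<le> (\<Sum>m=0..n. h m)"
  proof (rule sum_mono)
    fix m
    show "M * lam ^ m * fps_nth (Gq ^ 2 * second_order_rem G G m) n \<le> h m"
    proof (cases "m < 2")
      case False
      then have "M * (lam ^ m * of_nat (m choose 2)) * f (m - 2)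
                   \<le> M * ((2 * lam) ^ 2 * (2 * lam) ^ (m - 2)) * f (m - 2)"
        using M fnn lam by (intro mult_right_mono mult_left_mono power_mult_choose_two_le) auto
      with False show ?thesis
        unfolding fps_nth_mult_second_order_rem_same h_def f_def by (simp add: mult_ac)
    qed (simp add: fps_nth_mult_second_order_rem_same h_def binomial_eq_0)
  qed
  also have "\<dots> \<le> (\<Sum>m=0..Suc (Suc n). h m)"
    using M lam fnn by (intro sum_mono2) (auto simp: h_def)
  also have "\<dots> = M * (2 * lam) ^ 2 * (\<Sum>j=0..n. (2 * lam) ^ j * f j)"
    unfolding sum.atLeast0_atMost_Suc_shift by (simp add: h_def sum_distrib_left)
  also have "(\<Sum>j=0..n. (2 * lam) ^ j * f j) = fps_nth (Gq ^ 2 * inverse (1 - fps_const (2 * lam) * G)) n"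
    unfolding f_def using G0 by (rule fps_nth_mult_inverse_one_minus_cmult[symmetric])
  finally show ?thesis .
qed

lemma fps_mult_inverse_one_minus_scale_bound:
  fixes Gq \<Phi> :: "real fps"
  assumes \<beta>: "\<beta> > 0" and a: "a > 0" and K: "K \<ge> 0"
    and Gq0: "fps_nth Gq 0 = 0" and Gqnn: "\<And>k. fps_nth Gq k \<ge> 0" and Gq: "\<And>k. fps_nth Gq k \<le> K * scale a \<beta> \<gamma> k"
    and \<Phi>0: "fps_nth \<Phi> 0 = 0" and \<Phi>nn: "\<And>k. fps_nth \<Phi> k \<ge> 0" and \<Phi>: "\<And>k. fps_nth \<Phi> k \<le> C * scale a \<beta> \<gamma> k"
  shows "\<exists>D\<ge>0. \<forall>k\<ge>1. fps_nth (Gq * inverse (1 - \<Phi>)) k \<le> D * scale a \<beta> \<gamma> k"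
proof -
  define c where "c = scale a \<beta> \<gamma>"
  define Y where "Y = inverse (1 - \<Phi>)"
  have cnn: "c k \<ge> 0" for k unfolding c_def using \<beta> by (rule scale_nonneg)
  obtain DY where DY: "\<And>k. k \<ge> 1 \<Longrightarrow> fps_nth Y k \<le> DY * c k"
    using inverse_one_minus_scale_bound[OF \<beta> a \<Phi>0 \<Phi>nn \<Phi>] unfolding Y_def c_def by blast
  define AY where "AY = max DY 1"
  have Y0: "fps_nth Y 0 \<le> AY" by (simp add: Y_def AY_def \<Phi>0)
  have Yk: "fps_nth Y k \<le> AY * c k" if "k \<ge> 1" for k
    using DY[OF that] mult_right_mono[of DY AY "c k"] cnn by (simp add: AY_def)
  obtain D1 where D1: "D1 \<ge> 0" "\<And>n. (\<Sum>k=1..n-1. c k * c (n - k)) \<le> D1 * c n"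
    using scale_convolution_le[OF \<beta> a, of \<gamma>] unfolding c_def by blast
  have "fps_nth (Gq * Y) k \<le> K * AY * (2 + D1) * c k" if "k \<ge> 1" for k
    using Gqnn Gq0 K Gq fps_nth_inverse_one_minus_nonneg[OF \<Phi>0 \<Phi>nn] Y0 Yk cnn D1 that
    by (intro fps_mult_scale_bound[where c = c]) (auto simp: Y_def c_def)
  moreover have "K * AY * (2 + D1) \<ge> 0" using K D1 by (simp add: AY_def)
  ultimately show ?thesis unfolding Y_def c_def by blast
qed

lemma quadratic_term_bound:
  fixes H P B Q :: "'a::real_normed_field fps"
  assumes \<beta>: "\<beta> > 0" and a: "a > 0" and s: "s \<ge> 1"
    and M: "M \<ge> 0" and lam: "lam \<ge> 0" and Hb: "\<And>m. norm (fps_nth H m) \<le> M * lam ^ m"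
    and K: "K \<ge> 0" and Pb: "\<And>k. norm (fps_nth P k) \<le> K * scale a \<beta> \<gamma> k"
    and Bb: "\<And>k. norm (fps_nth B k) \<le> K * scale a \<beta> \<gamma> k"
    and Qlow: "\<And>k. k < s \<Longrightarrow> fps_nth Q k = 0" and Qb: "\<And>k. norm (fps_nth Q k) \<le> K * scale a \<beta> \<gamma> k"
  shows "\<exists>E. \<forall>n\<ge>2 * s. norm (\<Sum>m=0..n. fps_nth H m * fps_nth (Q ^ 2 * second_order_rem P B m) n)
                          \<le> E * scale a \<beta> \<gamma> (n - s)"
proof -
  define c where "c = scale a \<beta> \<gamma>"
  have cnn: "c k \<ge> 0" for k unfolding c_def using \<beta> by (rule scale_nonneg)
  have c0: "c 0 = 0" by (simp add: c_def scale_def)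
  define G where "G = Abs_fps (\<lambda>k. K * c k)"
  define Gq where "Gq = Abs_fps (\<lambda>k. if k < s then 0 else K * c k)"
  define \<Phi> where "\<Phi> = fps_const (2 * lam) * G"
  define Z where "Z = Gq * inverse (1 - \<Phi>)"
  have Gq0: "fps_nth Gq 0 = 0" and \<Phi>0: "fps_nth \<Phi> 0 = 0" using s c0 by (simp_all add: Gq_def \<Phi>_def G_def)
  have Gqnn: "fps_nth Gq k \<ge> 0" and Gqb: "fps_nth Gq k \<le> K * scale a \<beta> \<gamma> k" for k
    using K cnn by (simp_all add: Gq_def c_def)
  have \<Phi>nn: "fps_nth \<Phi> k \<ge> 0" and \<Phi>b: "fps_nth \<Phi> k \<le> 2 * lam * K * scale a \<beta> \<gamma> k" for k
    using K lam cnn by (simp_all add: \<Phi>_def G_def c_def)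
  obtain KZ where KZ: "KZ \<ge> 0" "\<And>k. k \<ge> 1 \<Longrightarrow> fps_nth Z k \<le> KZ * c k"
    using fps_mult_inverse_one_minus_scale_bound[OF \<beta> a K Gq0 Gqnn Gqb \<Phi>0 \<Phi>nn \<Phi>b]
    unfolding Z_def c_def by blast
  obtain Ds where Ds: "\<And>n. n \<ge> 2 * s \<Longrightarrow> (\<Sum>k=s..n-s. c k * c (n - k)) \<le> Ds * c (n - s)"
    using scale_convolution_tail[OF \<beta> s a, of \<gamma>] unfolding c_def by blast
  have Znn: "fps_nth Z k \<ge> 0" for k
    unfolding Z_def fps_mult_nth
    by (intro sum_nonneg mult_nonneg_nonneg Gqnn fps_nth_inverse_one_minus_nonneg \<Phi>0 \<Phi>nn)
  have Zlow: "fps_nth Z k = 0" if "k < s" for k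
    unfolding Z_def using that by (intro fps_nth_mult_eq_0[of s]) (auto simp: Gq_def)
  have "norm (\<Sum>m=0..n. fps_nth H m * fps_nth (Q ^ 2 * second_order_rem P B m) n)
          \<le> (M * (2 * lam) ^ 2 * (K * KZ * Ds)) * c (n - s)" if n: "n \<ge> 2 * s" for n
  proof -
    have "fps_majorant G P" "fps_majorant G B" "fps_majorant Gq Q"
      using Pb Bb Qb Qlow by (auto simp: fps_majorant_def G_def Gq_def c_def)
    from quadratic_term_majorant[OF M lam Hb this] c0
    have "norm (\<Sum>m=0..n. fps_nth H m * fps_nth (Q ^ 2 * second_order_rem P B m) n)
            \<le> M * (2 * lam) ^ 2 * fps_nth (Gq * Z) n"
      by (simp add: Z_def \<Phi>_def G_def power2_eq_square mult.assoc)
    also have "fps_nth (Gq * Z) n \<le> K * KZ * Ds * c (n - s)"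
      using Gqnn Znn Zlow KZ cnn s K Ds n by (intro fps_mult_tail_bound[where c = c]) (auto simp: Gq_def)
    finally show ?thesis using M by (simp add: mult_left_mono mult.assoc)
  qed
  then show ?thesis unfolding c_def by blast
qed

lemma bigo_scale_div_powerI:
  fixes f :: "nat \<Rightarrow> complex"
  assumes \<beta>: "\<beta> > 0" and bound: "\<And>n. n \<ge> N \<Longrightarrow> norm (f n) \<le> E * (scale a \<beta> \<gamma> n / real n ^ r)"
  shows "f \<in> O(\<lambda>n. complex_of_real (scale a \<beta> \<gamma> n) / of_nat n ^ r)"
proof (rule bigoI[of _ E])
  have "norm (complex_of_real (scale a \<beta> \<gamma> n) / of_nat n ^ r) = scale a \<beta> \<gamma> n / real n ^ r" for n
    using scale_nonneg[OF \<beta>] by (simp add: norm_divide norm_power)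
  with bound show "eventually (\<lambda>n. norm (f n) \<le> E * norm (complex_of_real (scale a \<beta> \<gamma> n) / of_nat n ^ r)) at_top"
    unfolding eventually_at_top_linorder by auto
qed

lemma bigo_scale_diffI:
  fixes f :: "nat \<Rightarrow> complex"
  assumes \<beta>: "\<beta> > 0" and s: "s \<ge> 1" "real r \<le> real a / 2 * real s"
    and bound: "\<And>n. n \<ge> 2 * s \<Longrightarrow> norm (f n) \<le> E * scale a \<beta> \<gamma> (n - s)"
  shows "f \<in> O(\<lambda>n. complex_of_real (scale a \<beta> \<gamma> n) / of_nat n ^ r)"
proof (rule bigo_scale_div_powerI[OF \<beta>])
  fix n assume n: "n \<ge> 2 * s"
  have "norm (f n) \<le> \<bar>E\<bar> * scale a \<beta> \<gamma> (n - s)"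
    using bound[OF n] scale_nonneg[OF \<beta>, of a \<gamma> "n - s"]
    by (meson abs_ge_self mult_right_mono order.trans)
  also have "\<dots> \<le> \<bar>E\<bar> * (2 powr \<bar>\<gamma>\<bar> / \<beta> ^ s * (scale a \<beta> \<gamma> n / real n ^ r))"
    using n s by (intro mult_left_mono scale_diff_le_scale_div_power[OF \<beta>]) auto
  finally show "norm (f n) \<le> \<bar>E\<bar> * (2 powr \<bar>\<gamma>\<bar> / \<beta> ^ s) * (scale a \<beta> \<gamma> n / real n ^ r)"
    by (simp add: mult.assoc)
qed

lemma linear_term_bigo:
  fixes G Q :: "complex fps"
  assumes \<beta>: "\<beta> > 0" and a: "a > 0" and s: "s \<ge> 1" "real r \<le> real a / 2 * real s"
    and G: "\<And>k. k \<ge> 1 \<Longrightarrow> norm (fps_nth G k) \<le> D * scale a \<beta> \<gamma> k"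
    and K: "K \<ge> 0" and Qlow: "\<And>k. k < s \<Longrightarrow> fps_nth Q k = 0"
    and Qb: "\<And>k. norm (fps_nth Q k) \<le> K * scale a \<beta> \<gamma> k"
  shows "(\<lambda>n. \<Sum>k=s..n. fps_nth G k * fps_nth Q (n - k))
           \<in> O(\<lambda>n. complex_of_real (scale a \<beta> \<gamma> n) / of_nat n ^ r)"
proof -
  have cnn: "scale a \<beta> \<gamma> k \<ge> 0" for k using \<beta> by (rule scale_nonneg)
  obtain Ds where Ds: "Ds \<ge> 0" "\<And>n. n \<ge> 2 * s \<Longrightarrow>
      (\<Sum>k=s..n-s. scale a \<beta> \<gamma> k * scale a \<beta> \<gamma> (n - k)) \<le> Ds * scale a \<beta> \<gamma> (n - s)"
    using scale_convolution_tail[OF \<beta> s(1) a, of \<gamma>] by blast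
  have G': "norm (fps_nth G k) \<le> max D 0 * scale a \<beta> \<gamma> k" if "k \<ge> 1" for k
  proof -
    have "D * scale a \<beta> \<gamma> k \<le> max D 0 * scale a \<beta> \<gamma> k" by (intro mult_right_mono cnn) simp
    with G[OF that] show ?thesis by linarith
  qed
  have "norm (\<Sum>k=s..n. fps_nth G k * fps_nth Q (n - k)) \<le> max D 0 * K * Ds * scale a \<beta> \<gamma> (n - s)"
    if "n \<ge> 2 * s" for n
    using cnn s(1) K G' Qlow Qb Ds that by (intro linear_tail_bound) auto
  then show ?thesis by (rule bigo_scale_diffI[OF \<beta> s])
qed

text \<open>A composition with a polynomial has geometrically decaying coefficients, so it suffices
  to bound them by the scale with exponent \<gamma> - r.\<close>

lemma fps_compose_poly_bigo:
  fixes H P :: "complex fps"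
  assumes \<beta>: "\<beta> > 0" and a: "a > 0" and H: "fps_conv_radius H > 0"
    and P0: "fps_nth P 0 = 0" and P: "\<And>i. i > R \<Longrightarrow> fps_nth P i = 0"
  shows "(\<lambda>n. fps_nth (H oo P) n) \<in> O(\<lambda>n. complex_of_real (scale a \<beta> \<gamma> n) / of_nat n ^ r)"
proof -
  define c' where "c' = scale a \<beta> (\<gamma> - real r)"
  have P': "\<And>n. n \<ge> Suc R \<Longrightarrow> norm (fps_nth P n) \<le> 0 * c' n" using P by simp
  have c': "\<And>n. 1 \<le> n \<Longrightarrow> c' n > 0" unfolding c'_def using \<beta> by (rule scale_pos)
  obtain KP where KP: "KP \<ge> 0" "\<forall>n\<ge>1. norm (fps_nth P n) \<le> KP * c' n"
    using eventually_bound_imp_bound[where f = "\<lambda>n. norm (fps_nth P n)", OF P' c'] by blast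
  have Pb: "norm (fps_nth P k) \<le> KP * c' k" for k
    using KP P0 by (cases "k = 0") (auto simp: c'_def scale_def)
  obtain M lam where Mlam: "M \<ge> 0" "lam \<ge> 0" "\<And>m. norm (fps_nth H m) \<le> M * lam ^ m"
    using fps_nth_geometric_bound[OF H] by blast
  obtain D where D: "\<And>k. k \<ge> 1 \<Longrightarrow> norm (fps_nth (H oo P) k) \<le> D * c' k"
    using fps_compose_scale_bound[OF \<beta> a Mlam P0 KP(1), of "\<gamma> - real r"] Pb unfolding c'_def by blast
  show ?thesis
  proof (rule bigo_scale_div_powerI[OF \<beta>])
    fix n :: nat assume n: "n \<ge> 1"
    have "c' n = scale a \<beta> \<gamma> n / real n ^ r"
      using n by (simp add: c'_def scale_def powr_diff powr_realpow)
    with D[OF n] show "norm (fps_nth (H oo P) n) \<le> D * (scale a \<beta> \<gamma> n / real n ^ r)" by simp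
  qed
qed

lemma fps_compose_cutoff_split:
  fixes H B :: "'a::comm_ring_1 fps" and s n :: nat
  defines "P \<equiv> fps_cutoff s B"
  defines "Q \<equiv> B - fps_cutoff s B"
  assumes B0: "fps_nth B 0 = 0" and n: "2 * s \<le> n"
  shows "fps_nth (H oo B) n - (\<Sum>k<s. fps_nth (fps_deriv H oo B) k * fps_nth B (n - k))
           = fps_nth (H oo P) n + (\<Sum>k=s..n. fps_nth (fps_deriv H oo P) k * fps_nth Q (n - k))
             + (\<Sum>m=0..n. fps_nth H m * fps_nth (Q ^ 2 * second_order_rem P B m) n)"
proof -
  have BPQ: "B = P + Q" by (simp add: P_def Q_def)
  have P0: "fps_nth P 0 = 0" and Q0: "fps_nth Q 0 = 0" using B0 by (simp_all add: P_def Q_def)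
  have low: "(\<Sum>k<s. fps_nth (fps_deriv H oo P) k * fps_nth Q (n - k))
               = (\<Sum>k<s. fps_nth (fps_deriv H oo B) k * fps_nth B (n - k))"
  proof (rule sum.cong[OF refl])
    fix k assume k: "k \<in> {..<s}"
    have "fps_nth (fps_deriv H oo P) k = fps_nth (fps_deriv H oo B) k"
      using k by (intro fps_nth_compose_cong) (auto simp: P_def)
    moreover have "fps_nth Q (n - k) = fps_nth B (n - k)" using k n by (simp add: Q_def)
    ultimately show "fps_nth (fps_deriv H oo P) k * fps_nth Q (n - k)
                       = fps_nth (fps_deriv H oo B) k * fps_nth B (n - k)" by simp
  qed
  have split: "{0..n} = {..<s} \<union> {s..n}" using n by auto
  have "(\<Sum>k=0..n. fps_nth (fps_deriv H oo P) k * fps_nth Q (n - k))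
          = (\<Sum>k<s. fps_nth (fps_deriv H oo P) k * fps_nth Q (n - k))
            + (\<Sum>k=s..n. fps_nth (fps_deriv H oo P) k * fps_nth Q (n - k))"
    unfolding split by (rule sum.union_disjoint) auto
  with fps_compose_add_split[OF P0 Q0, of H n] low show ?thesis
    unfolding BPQ[symmetric] by simp
qed

lemma fps_compose_linearization:
  fixes H B :: "complex fps"
  assumes \<beta>: "\<beta> > 0" and a: "a > 0" and H: "fps_conv_radius H > 0" and B0: "fps_nth B 0 = 0"
    and K: "K \<ge> 0" and Bb: "\<And>k. norm (fps_nth B k) \<le> K * scale a \<beta> \<gamma> k"
  shows "(\<lambda>n. fps_nth (H oo B) n - (\<Sum>k\<le>2 * r. fps_nth (fps_deriv H oo B) k * fps_nth B (n - k)))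
           \<in> O(\<lambda>n. complex_of_real (scale a \<beta> \<gamma> n) / of_nat n ^ r)"
proof -
  define s where "s = Suc (2 * r)"
  define P where "P = fps_cutoff s B"
  define Q where "Q = B - fps_cutoff s B"
  let ?O = "O(\<lambda>n. complex_of_real (scale a \<beta> \<gamma> n) / of_nat n ^ r)"
  have "real r \<le> 1 / 2 * real s" by (simp add: s_def)
  also have "\<dots> \<le> real a / 2 * real s" using a by (intro mult_right_mono) auto
  finally have s: "s \<ge> 1" "real r \<le> real a / 2 * real s" by (simp_all add: s_def)
  have P0: "fps_nth P 0 = 0" using B0 by (simp add: P_def)
  have Pb: "norm (fps_nth P k) \<le> K * scale a \<beta> \<gamma> k"
    and Qb: "norm (fps_nth Q k) \<le> K * scale a \<beta> \<gamma> k" for k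
    using Bb[of k] K scale_nonneg[OF \<beta>, of a \<gamma> k] by (simp_all add: P_def Q_def)
  have Qlow: "fps_nth Q k = 0" if "k < s" for k using that by (simp add: Q_def)
  obtain M lam where Mlam: "M \<ge> 0" "lam \<ge> 0" "\<And>m. norm (fps_nth H m) \<le> M * lam ^ m"
    using fps_nth_geometric_bound[OF H] by blast
  obtain M' lam' where M'lam': "M' \<ge> 0" "lam' \<ge> 0" "\<And>m. norm (fps_nth (fps_deriv H) m) \<le> M' * lam' ^ m"
    using fps_nth_geometric_bound[OF less_le_trans[OF H fps_conv_radius_deriv]] by blast
  obtain D where D: "\<And>k. k \<ge> 1 \<Longrightarrow> norm (fps_nth (fps_deriv H oo P) k) \<le> D * scale a \<beta> \<gamma> k"
    using fps_compose_scale_bound[OF \<beta> a M'lam' P0 K Pb] by blast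
  obtain E where E: "\<And>n. n \<ge> 2 * s \<Longrightarrow>
      norm (\<Sum>m=0..n. fps_nth H m * fps_nth (Q ^ 2 * second_order_rem P B m) n) \<le> E * scale a \<beta> \<gamma> (n - s)"
    using quadratic_term_bound[OF \<beta> a s(1) Mlam K Pb Bb Qlow Qb] by blast
  have "(\<lambda>n. fps_nth (H oo P) n) \<in> ?O"
    using fps_compose_poly_bigo[OF \<beta> a H P0, of "2 * r"] by (simp add: P_def s_def)
  moreover have "(\<lambda>n. \<Sum>k=s..n. fps_nth (fps_deriv H oo P) k * fps_nth Q (n - k)) \<in> ?O"
    by (rule linear_term_bigo[OF \<beta> a s D K Qlow Qb])
  moreover have "(\<lambda>n. \<Sum>m=0..n. fps_nth H m * fps_nth (Q ^ 2 * second_order_rem P B m) n) \<in> ?O"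
    using E by (rule bigo_scale_diffI[OF \<beta> s])
  ultimately have "(\<lambda>n. fps_nth (H oo P) n + (\<Sum>k=s..n. fps_nth (fps_deriv H oo P) k * fps_nth Q (n - k))
                    + (\<Sum>m=0..n. fps_nth H m * fps_nth (Q ^ 2 * second_order_rem P B m) n)) \<in> ?O"
    by (intro sum_in_bigo)
  moreover have "eventually (\<lambda>n. fps_nth (H oo P) n + (\<Sum>k=s..n. fps_nth (fps_deriv H oo P) k * fps_nth Q (n - k))
                    + (\<Sum>m=0..n. fps_nth H m * fps_nth (Q ^ 2 * second_order_rem P B m) n)
                  = fps_nth (H oo B) n - (\<Sum>k\<le>2 * r. fps_nth (fps_deriv H oo B) k * fps_nth B (n - k))) at_top"
    unfolding eventually_at_top_linorder
    using fps_compose_cutoff_split[OF B0, of s _ H, folded P_def Q_def]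
    by (intro exI[of _ "2 * s"]) (simp add: s_def lessThan_Suc_atMost)
  ultimately show ?thesis by (rule landau_o.big.in_cong[THEN iffD1, rotated])
qed

section \<open>Expansions at z = 1/n\<close>

lemma eval_fps_split:
  fixes F :: "complex fps"
  assumes "ereal (norm z) < fps_conv_radius F"
  shows "eval_fps F z = (\<Sum>l<r. fps_nth F l * z ^ l) + z ^ r * eval_fps (fps_shift r F) z"
proof -
  have sF: "summable (\<lambda>l. fps_nth F l * z ^ l)"
    using assms by (intro summable_fps) simp
  have sG: "summable (\<lambda>l. fps_nth (fps_shift r F) l * z ^ l)"
    using assms by (intro summable_fps) simp
  have "eval_fps F z = (\<Sum>l. fps_nth F (l + r) * z ^ (l + r)) + (\<Sum>l<r. fps_nth F l * z ^ l)"
    unfolding eval_fps_def by (rule suminf_split_initial_segment[OF sF])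
  also have "(\<Sum>l. fps_nth F (l + r) * z ^ (l + r)) = (\<Sum>l. z ^ r * (fps_nth (fps_shift r F) l * z ^ l))"
    by (simp add: power_add algebra_simps)
  also have "\<dots> = z ^ r * eval_fps (fps_shift r F) z"
    unfolding eval_fps_def by (rule suminf_mult[OF sG])
  finally show ?thesis by simp
qed

lemma has_fps_expansion_bigo_at_0:
  fixes f :: "complex \<Rightarrow> complex"
  assumes "f has_fps_expansion F"
  shows "(\<lambda>z. f z - (\<Sum>l<r. fps_nth F l * z ^ l)) \<in> O[at 0](\<lambda>z. z ^ r)"
proof -
  define G where "G = fps_shift r F"
  have rad: "fps_conv_radius F > 0" and ev: "eventually (\<lambda>z. eval_fps F z = f z) (nhds 0)"
    using assms by (auto simp: has_fps_expansion_def)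
  have "eventually (\<lambda>z. z \<in> eball 0 (fps_conv_radius F)) (nhds 0)"
    using rad by (intro eventually_nhds_in_open) (auto simp: zero_ereal_def)
  with ev have "eventually (\<lambda>z. z ^ r * eval_fps G z = f z - (\<Sum>l<r. fps_nth F l * z ^ l)) (nhds 0)"
  proof eventually_elim
    case (elim z)
    with eval_fps_split[of z F r] show ?case by (simp add: G_def)
  qed
  then have eq: "eventually (\<lambda>z. z ^ r * eval_fps G z = f z - (\<Sum>l<r. fps_nth F l * z ^ l)) (at 0)"
    by (simp add: eventually_nhds_conv_at)
  have "isCont (eval_fps G) 0"
    using rad by (intro continuous_eval_fps) (simp add: G_def zero_ereal_def)
  then have "eval_fps G \<in> O[at 0](\<lambda>_. 1)"
    by (intro bigoI_tendsto[where c = "eval_fps G 0"]) (auto simp: isCont_def)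
  then have "(\<lambda>z. z ^ r * eval_fps G z) \<in> O[at 0](\<lambda>z. z ^ r)"
    by (intro landau_o.big_1_mult) simp_all
  from this eq show ?thesis by (rule landau_o.big.in_cong[THEN iffD1, rotated])
qed

lemma has_fps_expansion_bigo_inverse_nat:
  fixes f :: "complex \<Rightarrow> complex"
  assumes "f has_fps_expansion F"
  shows "(\<lambda>n. f (1 / of_nat n) - (\<Sum>l<r. fps_nth F l / of_nat n ^ l)) \<in> O(\<lambda>n. 1 / of_nat n ^ r)"
proof -
  have "filterlim (\<lambda>n. 1 / of_nat n :: complex) (at 0) sequentially"
    by (intro filterlim_atI lim_1_over_n eventually_sequentiallyI[of 1]) auto
  from landau_o.big.compose[OF has_fps_expansion_bigo_at_0[OF assms] this]
  show ?thesis by (simp add: power_one_over)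
qed

lemma has_fps_expansion_ln_one_plus: "(\<lambda>w::complex. ln (1 + w)) has_fps_expansion fps_ln 1"
proof -
  have ev: "eventually (\<lambda>w::complex. dist w 0 < 1) (nhds 0)"
    unfolding eventually_nhds_metric by (intro exI[of _ 1]) auto
  have "eventually (\<lambda>w::complex. eval_fps (fps_ln 1) w = ln (1 + w)) (nhds 0)"
  proof (rule eventually_mono[OF ev])
    fix w :: complex assume "dist w 0 < 1"
    then have w: "norm w < 1" by simp
    have "(\<lambda>n. - ((-w)^n) / of_nat n) sums ln (1 + w)" by (rule Ln_series'[OF w])
    moreover have "(\<lambda>n. - ((-w)^n) / of_nat n) = (\<lambda>n. fps_nth (fps_ln 1) n * w ^ n)"
    proof
      fix n :: nat
      show "- ((-w)^n) / of_nat n = fps_nth (fps_ln 1) n * w ^ n"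
      proof (cases n)
        case 0 then show ?thesis by (simp add: fps_ln_nth)
      next
        case (Suc m)
        then show ?thesis by (simp add: fps_ln_nth power_minus' field_simps)
      qed
    qed
    ultimately show "eval_fps (fps_ln 1) w = ln (1 + w)"
      unfolding eval_fps_def by (simp add: sums_iff)
  qed
  then show ?thesis by (auto simp: has_fps_expansion_def)
qed

lemma has_fps_expansion_shift_1:
  fixes F :: "complex fps"
  assumes f: "f has_fps_expansion F" and F0: "fps_nth F 0 = 0"
  shows "(\<lambda>x. if x = 0 then fps_nth F 1 else f x / x) has_fps_expansion fps_shift 1 F"
proof (cases "F = 0")
  case True
  have "eventually (\<lambda>z. f z = 0) (nhds 0)" using f True by (simp add: has_fps_expansion_0_iff)
  then have "eventually (\<lambda>z. (if z = 0 then fps_nth F 1 else f z / z) = 0) (nhds 0)"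
    by (rule eventually_mono) (auto simp: True)
  then show ?thesis using True by (simp add: has_fps_expansion_0_iff)
next
  case False
  have "1 \<le> subdegree F" using False F0 by (intro subdegree_geI) auto
  from has_fps_expansion_shift[OF f this refl] show ?thesis by (simp only: power_one_right)
qed

lemma has_fps_expansion_linear: "(\<lambda>z::complex. (- K) * z) has_fps_expansion (- fps_const K * fps_X)"
  using has_fps_expansion_cmult_left[OF has_fps_expansion_fps_X, of "- K"] by simp

lemma has_fps_expansion_binomial_linear:
  "(\<lambda>z::complex. (1 + (- K) * z) powr c) has_fps_expansion (fps_binomial c oo (- fps_const K * fps_X))"
  using has_fps_expansion_compose[OF has_fps_expansion_binomial_complex[of c] has_fps_expansion_linear[of K]]
  by (simp add: o_def)

definition log_correction :: "complex \<Rightarrow> complex \<Rightarrow> complex" where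
  "log_correction K z = (if z = 0 then 0 else (ln (1 + (- K) * z) + K * z) / z)"

lemma has_fps_expansion_log_correction:
  "log_correction K has_fps_expansion fps_shift 1 ((fps_ln 1 oo (- fps_const K * fps_X)) + fps_const K * fps_X)"
proof -
  have A: "(\<lambda>z. ln (1 + (- K) * z) + K * z) has_fps_expansion ((fps_ln 1 oo (- fps_const K * fps_X)) + fps_const K * fps_X)"
    using has_fps_expansion_add[OF has_fps_expansion_compose[OF has_fps_expansion_ln_one_plus has_fps_expansion_linear[of K]]
          has_fps_expansion_cmult_left[OF has_fps_expansion_fps_X, of K]]
    by (simp add: o_def)
  have n0: "fps_nth ((fps_ln 1 oo (- fps_const K * fps_X)) + fps_const K * fps_X) 0 = 0"
    by (simp add: fps_compose_nth fps_ln_nth)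
  have n1: "fps_nth ((fps_ln 1 oo (- fps_const K * fps_X)) + fps_const K * fps_X) 1 = 0"
    by (simp add: fps_compose_nth fps_ln_nth)
  from has_fps_expansion_shift_1[OF A n0] show ?thesis
    unfolding n1 by (simp add: log_correction_def[abs_def])
qed

lemma has_fps_expansion_exp_log_correction:
  "(\<lambda>z. exp (\<alpha> * log_correction K z)) has_fps_expansion
     (fps_exp 1 oo (fps_const \<alpha> * fps_shift 1 ((fps_ln 1 oo (- fps_const K * fps_X)) + fps_const K * fps_X)))"
proof -
  have n1: "fps_nth ((fps_ln 1 oo (- fps_const K * fps_X)) + fps_const K * fps_X) 1 = 0"
    by (simp add: fps_compose_nth fps_ln_nth)
  show ?thesis
    using has_fps_expansion_compose[OF has_fps_expansion_exp1 has_fps_expansion_cmult_left[OF has_fps_expansion_log_correction, of \<alpha> K]]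
    by (simp add: o_def n1 fps_ln_nth)
qed

definition div_one_minus :: "complex \<Rightarrow> complex \<Rightarrow> complex" where
  "div_one_minus K z = (if z = 0 then 0 else z / (1 - K * z))"

lemma has_fps_expansion_div_one_minus: "div_one_minus K has_fps_expansion (fps_X / (1 - fps_const K * fps_X))"
proof -
  have D: "(\<lambda>z. 1 - K * z) has_fps_expansion (1 - fps_const K * fps_X)"
    by (intro has_fps_expansion_diff has_fps_expansion_1 has_fps_expansion_cmult_left has_fps_expansion_fps_X)
  have sd: "subdegree (1 - fps_const K * fps_X) = 0" by (simp add: subdegree_eq_0_iff)
  have nz: "(1 - fps_const K * fps_X) \<noteq> 0"
  proof
    assume "(1 - fps_const K * fps_X) = 0"
    then have "fps_nth (1 - fps_const K * fps_X) 0 = 0" by simp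
    then show False by simp
  qed
  note X = has_fps_expansion_divide[OF has_fps_expansion_fps_X D _ nz refl]
  have "(\<lambda>x. if x = 0 then fps_nth fps_X (subdegree (1 - fps_const K * fps_X)) /
               fps_nth (1 - fps_const K * fps_X) (subdegree (1 - fps_const K * fps_X))
          else x / (1 - K * x)) = div_one_minus K"
    unfolding sd by (auto simp: div_one_minus_def fun_eq_iff)
  with X show ?thesis by simp
qed

lemma fps_nth_div_one_minus_0: "fps_nth (fps_X / (1 - fps_const (K::complex) * fps_X)) 0 = 0"
  by (subst fps_divide_unit) auto

lemma fps_nth_compose_eq_truncated:
  fixes Bt W :: "'a::comm_ring_1 fps"
  assumes W0: "fps_nth W 0 = 0" and i: "i < r"
  shows "fps_nth (Bt oo W) i = fps_nth (\<Sum>l<r. fps_const (fps_nth Bt l) * W ^ l) i"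
proof -
  have "fps_nth (\<Sum>l<r. fps_const (fps_nth Bt l) * W ^ l) i = (\<Sum>l<r. fps_nth Bt l * fps_nth (W ^ l) i)"
    by (simp add: fps_sum_nth)
  also have "\<dots> = (\<Sum>l=0..i. fps_nth Bt l * fps_nth (W ^ l) i)"
    using i fps_nth_power_eq_0[OF W0] by (intro sum.mono_neutral_right) auto
  also have "\<dots> = fps_nth (Bt oo W) i" by (simp add: fps_compose_nth)
  finally show ?thesis by simp
qed


lemma powr_self_diff_eq:
  fixes x k \<alpha> :: real
  assumes x: "x > 0" and kx: "k < x"
  shows "(x - k) powr (\<alpha> * (x - k)) = x powr (\<alpha> * x) * x powr (-(\<alpha> * k)) * (1 - k / x) powr (-(\<alpha> * k))
           * exp (-(\<alpha> * k)) * exp (\<alpha> * ((ln (1 - k / x) + k / x) * x))"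
proof -
  define y where "y = 1 - k / x"
  have y: "y > 0" using x kx by (simp add: y_def field_simps)
  have xy: "x - k = x * y" using x by (simp add: y_def field_simps)
  have "(x - k) powr (\<alpha> * (x - k)) = x powr (\<alpha> * (x - k)) * y powr (\<alpha> * (x - k))"
    unfolding xy using x y by (simp add: powr_mult)
  also have "x powr (\<alpha> * (x - k)) = x powr (\<alpha> * x) * x powr (-(\<alpha> * k))"
    by (simp add: powr_add[symmetric] algebra_simps)
  also have "y powr (\<alpha> * (x - k)) = y powr (-(\<alpha> * k)) * exp (\<alpha> * x * ln y)"
    using y by (simp add: powr_def exp_add[symmetric] algebra_simps)
  also have "exp (\<alpha> * x * ln y) = exp (-(\<alpha> * k)) * exp (\<alpha> * ((ln y + k / x) * x))"
  proof -
    have "\<alpha> * x * ln y = -(\<alpha> * k) + \<alpha> * ((ln y + k / x) * x)" using x by (simp add: field_simps)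
    then show ?thesis by (simp add: exp_add[symmetric])
  qed
  finally show ?thesis by (simp add: y_def mult_ac)
qed

lemma scale_diff_even_eq:
  fixes a j n :: nat and \<beta> \<gamma> :: real
  assumes \<beta>: "\<beta> > 0" and n: "2 * j < n"
  shows "scale a \<beta> \<gamma> (n - 2 * j) = scale a \<beta> \<gamma> n * ((1 / real n) ^ (a * j) *
           (exp (-(real a / 2 * real (2 * j))) / \<beta> ^ (2 * j) *
            (1 - real (2 * j) / real n) powr (\<gamma> - real a / 2 * real (2 * j)) *
            exp (real a / 2 * ((ln (1 - real (2 * j) / real n) + real (2 * j) / real n) * real n))))"
proof -
  define x where "x = real n"
  define k where "k = real (2 * j)"
  define \<alpha> where "\<alpha> = real a / 2"
  define y where "y = 1 - k / x"
  have x: "x > 0" and kx: "k < x" using n by (simp_all add: x_def k_def)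
  have y: "y > 0" using x kx by (simp add: y_def field_simps)
  have "x powr (-(\<alpha> * k)) = (1 / x) ^ (a * j)"
    using x by (simp add: \<alpha>_def k_def powr_minus powr_realpow[symmetric] power_one_over
        inverse_eq_divide)
  then have e1: "(x - k) powr (\<alpha> * (x - k)) = x powr (\<alpha> * x) * (1 / x) ^ (a * j) * y powr (-(\<alpha> * k))
                   * exp (-(\<alpha> * k)) * exp (\<alpha> * ((ln y + k / x) * x))"
    using powr_self_diff_eq[OF x kx, of \<alpha>] by (simp add: y_def)
  have "x - k = x * y" using x by (simp add: y_def field_simps)
  then have e2: "(x - k) powr \<gamma> = x powr \<gamma> * y powr \<gamma>"
    using x y by (simp add: powr_mult)
  have e3: "\<beta> ^ (n - 2 * j) = \<beta> ^ n / \<beta> ^ (2 * j)" using n \<beta> by (simp add: power_diff)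
  have e4: "y powr (\<gamma> - \<alpha> * k) = y powr (-(\<alpha> * k)) * y powr \<gamma>" by (simp add: powr_add[symmetric])
  have "scale a \<beta> \<gamma> (n - 2 * j) = (x - k) powr (\<alpha> * (x - k)) * \<beta> ^ (n - 2 * j) * (x - k) powr \<gamma>"
    using n by (simp add: scale_def x_def k_def \<alpha>_def)
  also have "\<dots> = (x powr (\<alpha> * x) * \<beta> ^ n * x powr \<gamma>) * ((1 / x) ^ (a * j) *
           (exp (-(\<alpha> * k)) / \<beta> ^ (2 * j) * y powr (\<gamma> - \<alpha> * k) * exp (\<alpha> * ((ln y + k / x) * x))))"
    unfolding e1 e2 e3 e4 by (simp add: field_simps)
  finally show ?thesis by (simp add: scale_def x_def k_def \<alpha>_def y_def)
qed

definition Btilde_factor :: "nat \<Rightarrow> real \<Rightarrow> real \<Rightarrow> nat \<Rightarrow> complex \<Rightarrow> complex" where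
  "Btilde_factor a \<beta> \<gamma> j z = (let \<alpha> = complex_of_real (real a / 2); K = of_nat (2 * j) :: complex in
      exp (- (\<alpha> * K)) / complex_of_real \<beta> ^ (2 * j) * z ^ (a * j) *
      (1 + (- K) * z) powr (complex_of_real \<gamma> - \<alpha> * K) * exp (\<alpha> * log_correction K z))"

lemma Btilde_factor_of_real:
  fixes t :: real
  assumes t: "t > 0" and kt: "real (2 * j) * t < 1"
  shows "Btilde_factor a \<beta> \<gamma> j (complex_of_real t) = complex_of_real (t ^ (a * j) *
           (exp (-(real a / 2 * real (2 * j))) / \<beta> ^ (2 * j) *
            (1 - real (2 * j) * t) powr (\<gamma> - real a / 2 * real (2 * j)) *
            exp (real a / 2 * ((ln (1 - real (2 * j) * t) + real (2 * j) * t) / t))))"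
proof -
  define k where "k = real (2 * j)"
  define \<alpha> where "\<alpha> = real a / 2"
  have lin: "1 + (- of_nat (2 * j)) * complex_of_real t = complex_of_real (1 - k * t)"
    by (simp add: k_def)
  have "ln (complex_of_real (1 - k * t)) = complex_of_real (ln (1 - k * t))"
    using kt by (intro Ln_of_real) (simp add: k_def)
  then have log: "log_correction (of_nat (2 * j)) (complex_of_real t) = complex_of_real ((ln (1 - k * t) + k * t) / t)"
    using t unfolding log_correction_def lin by (simp add: k_def)
  have "complex_of_real (1 - k * t) powr complex_of_real (\<gamma> - \<alpha> * k)
          = complex_of_real ((1 - k * t) powr (\<gamma> - \<alpha> * k))"
    using kt by (intro powr_of_real) (simp add: k_def)
  then have pow: "(1 + (- of_nat (2 * j)) * complex_of_real t) powr (complex_of_real \<gamma> - complex_of_real \<alpha> * of_nat (2 * j))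
                    = complex_of_real ((1 - k * t) powr (\<gamma> - \<alpha> * k))"
    unfolding lin by (simp add: k_def)
  show ?thesis
    unfolding Btilde_factor_def Let_def \<alpha>_def[symmetric] log pow
    by (simp add: k_def exp_of_real[symmetric] field_simps)
qed

lemma scale_mult_Btilde_factor:
  assumes \<beta>: "\<beta> > 0" and n: "2 * j < n"
  shows "complex_of_real (scale a \<beta> \<gamma> n) * Btilde_factor a \<beta> \<gamma> j (1 / of_nat n)
           = complex_of_real (scale a \<beta> \<gamma> (n - 2 * j))"
proof -
  have "1 / (of_nat n :: complex) = complex_of_real (1 / real n)" by simp
  moreover have "real (2 * j) * (1 / real n) < 1" using n by (simp add: field_simps)
  ultimately show ?thesis
    using Btilde_factor_of_real[of "1 / real n" j a \<beta> \<gamma>] scale_diff_even_eq[OF \<beta> n, of a \<gamma>] n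
    by (simp add: field_simps)
qed

definition Btilde_factor_fps :: "nat \<Rightarrow> real \<Rightarrow> real \<Rightarrow> nat \<Rightarrow> complex fps" where
  "Btilde_factor_fps a \<beta> \<gamma> j = (let \<alpha> = complex_of_real (real a / 2); K = of_nat (2 * j) :: complex in
      fps_const (exp (- (\<alpha> * K)) / complex_of_real \<beta> ^ (2 * j))
      * fps_X ^ (a * j)
      * (fps_binomial (complex_of_real \<gamma> - \<alpha> * K) oo (- fps_const K * fps_X))
      * (fps_exp 1 oo (fps_const \<alpha> *
            fps_shift 1 ((fps_ln 1 oo (- fps_const K * fps_X)) + fps_const K * fps_X))))"

lemma Btilde_even_eq:
  "Btilde_even a \<beta> \<gamma> Bt j = Btilde_factor_fps a \<beta> \<gamma> j * (Bt oo (fps_X / (1 - fps_const (of_nat (2 * j)) * fps_X)))"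
  by (simp add: Btilde_even_def Btilde_factor_fps_def Let_def)

lemma has_fps_expansion_Btilde_factor: "Btilde_factor a \<beta> \<gamma> j has_fps_expansion Btilde_factor_fps a \<beta> \<gamma> j"
  unfolding Btilde_factor_def[abs_def] Btilde_factor_fps_def Let_def
  by (intro has_fps_expansion_mult has_fps_expansion_cmult_left has_fps_expansion_fps_X_power has_fps_expansion_binomial_linear has_fps_expansion_exp_log_correction)


lemma div_one_minus_inverse_nat:
  assumes "k < n"
  shows "div_one_minus (of_nat k) (1 / of_nat n) = 1 / of_nat (n - k)"
  using assms by (simp add: div_one_minus_def of_nat_diff field_simps)

lemma scale_diff_bigo:
  assumes \<beta>: "\<beta> > 0"
  shows "(\<lambda>n. complex_of_real (scale a \<beta> \<gamma> (n - s)) / of_nat (n - s) ^ r)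
           \<in> O(\<lambda>n. complex_of_real (scale a \<beta> \<gamma> n) / of_nat n ^ r)"
proof (rule bigo_scale_div_powerI[OF \<beta>])
  fix n assume n: "n \<ge> 2 * s + 1"
  define K where "K = 2 powr \<bar>\<gamma>\<bar> / \<beta> ^ s"
  have "scale a \<beta> \<gamma> (n - s) \<le> K * scale a \<beta> \<gamma> n"
    using scale_diff_le_scale_div_power[OF \<beta>, of s n 0 a \<gamma>] n by (simp add: K_def)
  moreover have "1 / real (n - s) ^ r \<le> 2 ^ r / real n ^ r"
  proof -
    have "real n ^ r \<le> (2 * real (n - s)) ^ r" using n by (intro power_mono) auto
    then have "real n ^ r \<le> 2 ^ r * real (n - s) ^ r" by (simp only: power_mult_distrib)
    moreover have "real (n - s) > 0" "real n > 0" using n by auto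
    ultimately show ?thesis by (simp add: divide_simps mult.commute)
  qed
  ultimately have "scale a \<beta> \<gamma> (n - s) * (1 / real (n - s) ^ r) \<le> K * scale a \<beta> \<gamma> n * (2 ^ r / real n ^ r)"
    using scale_nonneg[OF \<beta>] \<beta> by (intro mult_mono) (auto simp: K_def)
  then show "norm (complex_of_real (scale a \<beta> \<gamma> (n - s)) / of_nat (n - s) ^ r)
               \<le> K * 2 ^ r * (scale a \<beta> \<gamma> n / real n ^ r)"
    using scale_nonneg[OF \<beta>, of a \<gamma> "n - s"] by (simp add: norm_divide norm_power mult_ac)
qed

text \<open>Its Taylor coefficients below r are those of B~_{2j}; at z = 1/n its two factors are
  c_{n-2j}/c_n and the truncation of B~ below r evaluated at 1/(n - 2j).\<close>

definition Btilde_approx :: "nat \<Rightarrow> real \<Rightarrow> real \<Rightarrow> complex fps \<Rightarrow> nat \<Rightarrow> nat \<Rightarrow> complex \<Rightarrow> complex" where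
  "Btilde_approx a \<beta> \<gamma> Bt r j z =
     Btilde_factor a \<beta> \<gamma> j z * (\<Sum>l<r. fps_nth Bt l * div_one_minus (of_nat (2 * j)) z ^ l)"

lemma Btilde_approx_bigo:
  "(\<lambda>n. Btilde_approx a \<beta> \<gamma> Bt r j (1 / of_nat n) - (\<Sum>l<r. fps_nth (Btilde_even a \<beta> \<gamma> Bt j) l / of_nat n ^ l))
     \<in> O(\<lambda>n. 1 / of_nat n ^ r)"
proof -
  define W where "W = fps_X / (1 - fps_const (of_nat (2 * j)) * fps_X :: complex fps)"
  define F where "F = Btilde_factor_fps a \<beta> \<gamma> j * (\<Sum>l<r. fps_const (fps_nth Bt l) * W ^ l)"
  have "Btilde_approx a \<beta> \<gamma> Bt r j has_fps_expansion F"
    unfolding Btilde_approx_def[abs_def] F_def W_def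
    by (intro has_fps_expansion_mult has_fps_expansion_Btilde_factor has_fps_expansion_sum
        has_fps_expansion_cmult_left has_fps_expansion_power has_fps_expansion_div_one_minus)
  moreover have "fps_nth F l = fps_nth (Btilde_even a \<beta> \<gamma> Bt j) l" if "l < r" for l
    unfolding F_def Btilde_even_eq W_def[symmetric] using that
    by (intro fps_nth_mult_cong fps_nth_compose_eq_truncated[symmetric])
       (auto simp: W_def fps_nth_div_one_minus_0)
  ultimately show ?thesis
    using has_fps_expansion_bigo_inverse_nat[of "Btilde_approx a \<beta> \<gamma> Bt r j" F r] by simp
qed

lemma scale_mult_Btilde_approx:
  assumes \<beta>: "\<beta> > 0" and n: "2 * j < n"
  shows "complex_of_real (scale a \<beta> \<gamma> n) * Btilde_approx a \<beta> \<gamma> Bt r j (1 / of_nat n)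
           = complex_of_real (scale a \<beta> \<gamma> (n - 2 * j)) * (\<Sum>l<r. fps_nth Bt l / of_nat (n - 2 * j) ^ l)"
proof -
  have "complex_of_real (scale a \<beta> \<gamma> n) * Btilde_approx a \<beta> \<gamma> Bt r j (1 / of_nat n)
          = (complex_of_real (scale a \<beta> \<gamma> n) * Btilde_factor a \<beta> \<gamma> j (1 / of_nat n))
            * (\<Sum>l<r. fps_nth Bt l * div_one_minus (of_nat (2 * j)) (1 / of_nat n) ^ l)"
    by (simp only: Btilde_approx_def mult.assoc)
  then show ?thesis
    unfolding scale_mult_Btilde_factor[OF \<beta> n] div_one_minus_inverse_nat[OF n]
    by (simp add: power_one_over)
qed

lemma asymp_exp_even_diff_bigo:
  assumes \<beta>: "\<beta> > 0" and f: "asymp_exp_even f (scale a \<beta> \<gamma>) F"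
  shows "(\<lambda>m. f (2 * m - 2 * j) - complex_of_real (scale a \<beta> \<gamma> (2 * m - 2 * j))
                * (\<Sum>l<r. fps_nth F l / of_nat (2 * m - 2 * j) ^ l))
           \<in> O(\<lambda>m. complex_of_real (scale a \<beta> \<gamma> (2 * m)) / of_nat (2 * m) ^ r)"
proof -
  have "(\<lambda>m. f (2 * m) - complex_of_real (scale a \<beta> \<gamma> (2 * m)) * (\<Sum>l<r. fps_nth F l / of_nat (2 * m) ^ l))
          \<in> O(\<lambda>m. complex_of_real (scale a \<beta> \<gamma> (2 * m)) / of_nat (2 * m) ^ r)"
    using f unfolding asymp_exp_even_def by blast
  from landau_o.big.compose[OF this filterlim_minus_const_nat_at_top[of j]]
  have "(\<lambda>m. f (2 * m - 2 * j) - complex_of_real (scale a \<beta> \<gamma> (2 * m - 2 * j))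
                * (\<Sum>l<r. fps_nth F l / of_nat (2 * m - 2 * j) ^ l))
          \<in> O(\<lambda>m. complex_of_real (scale a \<beta> \<gamma> (2 * m - 2 * j)) / of_nat (2 * m - 2 * j) ^ r)"
    by (simp add: diff_mult_distrib2)
  also have "(\<lambda>m. complex_of_real (scale a \<beta> \<gamma> (2 * m - 2 * j)) / of_nat (2 * m - 2 * j) ^ r)
               \<in> O(\<lambda>m. complex_of_real (scale a \<beta> \<gamma> (2 * m)) / of_nat (2 * m) ^ r)"
    using landau_o.big.compose[OF scale_diff_bigo[OF \<beta>] mult_nat_left_at_top[of 2]] by simp
  finally show ?thesis .
qed

lemma asymp_exp_even_shift:
  fixes B Bt :: "complex fps"
  assumes \<beta>: "\<beta> > 0" and Basymp: "asymp_exp_even (\<lambda>n. fps_nth B n) (scale a \<beta> \<gamma>) Bt"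
  shows "asymp_exp_even (\<lambda>n. fps_nth B (n - 2 * j)) (scale a \<beta> \<gamma>) (Btilde_even a \<beta> \<gamma> Bt j)"
  unfolding asymp_exp_even_def
proof
  fix r :: nat
  define c where "c = (\<lambda>n. complex_of_real (scale a \<beta> \<gamma> n))"
  define T where "T = (\<lambda>n. \<Sum>l<r. fps_nth (Btilde_even a \<beta> \<gamma> Bt j) l / of_nat n ^ l)"
  define S where "S = (\<lambda>n. \<Sum>l<r. fps_nth Bt l / of_nat n ^ l)"
  define \<psi> where "\<psi> = Btilde_approx a \<beta> \<gamma> Bt r j"
  let ?O = "O(\<lambda>m. c (2 * m) / of_nat (2 * m) ^ r)"
  from landau_o.big.compose[OF Btilde_approx_bigo mult_nat_left_at_top[of 2]]
  have "(\<lambda>m. \<psi> (1 / of_nat (2 * m)) - T (2 * m)) \<in> O(\<lambda>m. 1 / of_nat (2 * m) ^ r)"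
    by (simp add: \<psi>_def T_def)
  from landau_o.big.mult_left[OF this, of "\<lambda>m. c (2 * m)"]
  have "(\<lambda>m. c (2 * m) * (\<psi> (1 / of_nat (2 * m)) - T (2 * m))) \<in> ?O"
    by simp
  moreover have "(\<lambda>m. fps_nth B (2 * m - 2 * j) - c (2 * m - 2 * j) * S (2 * m - 2 * j)) \<in> ?O"
    using asymp_exp_even_diff_bigo[OF \<beta> Basymp] unfolding c_def S_def .
  ultimately have "(\<lambda>m. (fps_nth B (2 * m - 2 * j) - c (2 * m - 2 * j) * S (2 * m - 2 * j))
                      + c (2 * m) * (\<psi> (1 / of_nat (2 * m)) - T (2 * m))) \<in> ?O"
    by (rule sum_in_bigo(1)[rotated])
  moreover have "eventually (\<lambda>m. (fps_nth B (2 * m - 2 * j) - c (2 * m - 2 * j) * S (2 * m - 2 * j))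
                      + c (2 * m) * (\<psi> (1 / of_nat (2 * m)) - T (2 * m))
                   = fps_nth B (2 * m - 2 * j) - c (2 * m) * T (2 * m)) at_top"
    unfolding eventually_at_top_linorder
  proof (intro exI[of _ "Suc j"] allI impI)
    fix m assume "m \<ge> Suc j"
    then have "c (2 * m) * \<psi> (1 / of_nat (2 * m)) = c (2 * m - 2 * j) * S (2 * m - 2 * j)"
      unfolding c_def \<psi>_def S_def by (intro scale_mult_Btilde_approx[OF \<beta>]) simp
    then show "(fps_nth B (2 * m - 2 * j) - c (2 * m - 2 * j) * S (2 * m - 2 * j))
                 + c (2 * m) * (\<psi> (1 / of_nat (2 * m)) - T (2 * m))
               = fps_nth B (2 * m - 2 * j) - c (2 * m) * T (2 * m)"
      by (simp add: algebra_simps)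
  qed
  ultimately show "(\<lambda>m. fps_nth B (2 * m - 2 * j) - complex_of_real (scale a \<beta> \<gamma> (2 * m))
                          * (\<Sum>l<r. fps_nth (Btilde_even a \<beta> \<gamma> Bt j) l / of_nat (2 * m) ^ l)) \<in> ?O"
    unfolding c_def T_def by (rule landau_o.big.in_cong[THEN iffD1, rotated])
qed

section \<open>The expansion of H(B(z))\<close>

lemma fps_nth_X_power_factor_eq_0:
  fixes c :: "'a::comm_ring_1"
  assumes "l < p"
  shows "fps_nth (fps_const c * fps_X ^ p * F * G * Y) l = 0"
proof -
  have eq: "fps_const c * fps_X ^ p * F * G * Y = fps_X ^ p * (fps_const c * F * G * Y)"
    by (simp add: mult_ac)
  show ?thesis unfolding eq using assms by (simp add: fps_X_power_mult_nth)
qed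

lemma Btilde_even_nth_eq_0:
  assumes "l < a * j"
  shows "fps_nth (Btilde_even a \<beta> \<gamma> Bt j) l = 0"
  unfolding Btilde_even_def Let_def by (rule fps_nth_X_power_factor_eq_0[OF assms])

lemma Btilde_H_nth:
  assumes a: "a > 0" and l: "l < r"
  shows "fps_nth (Btilde_H a \<beta> \<gamma> Bt H B) l
           = (\<Sum>j\<le>r. fps_nth (Btilde_even a \<beta> \<gamma> Bt j) l * fps_nth (fps_deriv H oo B) (2 * j))"
  unfolding Btilde_H_def fps_nth_Abs_fps
proof (rule suminf_finite)
  fix j assume "j \<notin> {..r}"
  with a l have "l < a * j" by (simp add: less_le_trans[OF _ mult_le_mono1[of 1 a j]])
  then show "fps_nth (Btilde_even a \<beta> \<gamma> Bt j) l * fps_nth (fps_deriv H oo B) (2 * j) = 0"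
    by (simp add: Btilde_even_nth_eq_0)
qed simp

lemma sum_even_coeffs:
  fixes A B :: "'a::comm_ring_1 fps"
  assumes Bodd: "\<And>n. odd n \<Longrightarrow> fps_nth B n = 0" and B0: "fps_nth B 0 = 0" and n: "even n"
  shows "(\<Sum>k\<le>2 * r. fps_nth A k * fps_nth B (n - k)) = (\<Sum>j\<le>r. fps_nth A (2 * j) * fps_nth B (n - 2 * j))"
proof (induction r)
  case (Suc r)
  have "fps_nth B (n - Suc (2 * r)) = 0"
    using Bodd[of "n - Suc (2 * r)"] B0 n by (cases "Suc (2 * r) \<le> n") auto
  moreover have "2 * Suc r = Suc (Suc (2 * r))" by simp
  ultimately show ?case using Suc by simp
qed simp

lemma asymp_exp_even_coeff_bound:
  fixes B Bt :: "complex fps"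
  assumes \<beta>: "\<beta> > 0" and B0: "fps_nth B 0 = 0" and Bodd: "\<And>n. odd n \<Longrightarrow> fps_nth B n = 0"
    and Basymp: "asymp_exp_even (\<lambda>n. fps_nth B n) (scale a \<beta> \<gamma>) Bt"
  shows "\<exists>K\<ge>0. \<forall>k. norm (fps_nth B k) \<le> K * scale a \<beta> \<gamma> k"
proof -
  define c where "c = scale a \<beta> \<gamma>"
  have cnn: "c k \<ge> 0" for k unfolding c_def using \<beta> by (rule scale_nonneg)
  have "(\<lambda>m. fps_nth B (2 * m) - complex_of_real (c (2 * m)) * (\<Sum>l<0. fps_nth Bt l / of_nat (2 * m) ^ l))
          \<in> O(\<lambda>m. complex_of_real (c (2 * m)) / of_nat (2 * m) ^ 0)"
    using Basymp[unfolded asymp_exp_even_def, rule_format, of 0] by (simp only: c_def)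
  then have "(\<lambda>m. fps_nth B (2 * m)) \<in> O(\<lambda>m. complex_of_real (c (2 * m)))" by simp
  then obtain C where "eventually (\<lambda>m. norm (fps_nth B (2 * m)) \<le> C * c (2 * m)) at_top"
    using cnn by (auto elim!: landau_o.bigE)
  then obtain N where N: "\<And>m. m \<ge> N \<Longrightarrow> norm (fps_nth B (2 * m)) \<le> C * c (2 * m)"
    unfolding eventually_at_top_linorder by blast
  have pos: "\<And>m. 1 \<le> m \<Longrightarrow> c (2 * m) > 0" unfolding c_def using \<beta> by (simp add: scale_pos)
  obtain K where K: "K \<ge> 0" "\<forall>m\<ge>1. norm (fps_nth B (2 * m)) \<le> K * c (2 * m)"
    using eventually_bound_imp_bound[where f = "\<lambda>m. norm (fps_nth B (2 * m))", OF N pos] by blast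
  have "norm (fps_nth B k) \<le> K * c k" for k
  proof (cases "even k")
    case True
    then obtain m where "k = 2 * m" by blast
    with K B0 cnn[of k] show ?thesis by (cases "m = 0") auto
  qed (use K cnn Bodd in auto)
  with K(1) show ?thesis unfolding c_def by blast
qed

theorem corollary13:
  fixes h :: "complex \<Rightarrow> complex" and H B Bt :: "complex fps"
    and a2 :: nat and \<beta> \<gamma> :: real
  assumes H: "h has_fps_expansion H"
    and B0: "fps_nth B 0 = 0"
    and Bodd: "\<And>n. odd n \<Longrightarrow> fps_nth B n = 0"
    and a2: "a2 > 0"
    and \<beta>: "\<beta> > 0"
    and Bt: "Bt \<noteq> 0"
    and Basymp: "asymp_exp_even (\<lambda>n. fps_nth B n) (scale a2 \<beta> \<gamma>) Bt"
  shows "asymp_exp_even (\<lambda>n. fps_nth (H oo B) n) (scale a2 \<beta> \<gamma>) (Btilde_H a2 \<beta> \<gamma> Bt H B)"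
  unfolding asymp_exp_even_def
proof
  fix r :: nat
  define A where "A = fps_deriv H oo B"
  define c where "c = (\<lambda>m. complex_of_real (scale a2 \<beta> \<gamma> (2 * m)))"
  define E where "E = (\<lambda>j m. fps_nth B (2 * m - 2 * j)
                          - c m * (\<Sum>l<r. fps_nth (Btilde_even a2 \<beta> \<gamma> Bt j) l / of_nat (2 * m) ^ l))"
  let ?O = "O(\<lambda>m. c m / of_nat (2 * m) ^ r)"
  obtain K where K: "K \<ge> 0" "\<And>k. norm (fps_nth B k) \<le> K * scale a2 \<beta> \<gamma> k"
    using asymp_exp_even_coeff_bound[OF \<beta> B0 Bodd Basymp] by blast
  have "fps_conv_radius H > 0" using H by (simp add: has_fps_expansion_def)
  from landau_o.big.compose[OF fps_compose_linearization[OF \<beta> a2 this B0 K] mult_nat_left_at_top[of 2]]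
  have "(\<lambda>m. fps_nth (H oo B) (2 * m) - (\<Sum>j\<le>r. fps_nth A (2 * j) * fps_nth B (2 * m - 2 * j))) \<in> ?O"
    by (simp add: sum_even_coeffs[OF Bodd B0] A_def c_def)
  moreover have "(\<lambda>m. fps_nth A (2 * j) * E j m) \<in> ?O" for j
    using asymp_exp_even_shift[OF \<beta> Basymp, of j] unfolding asymp_exp_even_def E_def c_def by simp
  ultimately have "(\<lambda>m. (fps_nth (H oo B) (2 * m) - (\<Sum>j\<le>r. fps_nth A (2 * j) * fps_nth B (2 * m - 2 * j)))
                       + (\<Sum>j\<le>r. fps_nth A (2 * j) * E j m)) \<in> ?O"
    by (intro sum_in_bigo(1) big_sum_in_bigo)
  moreover have "(\<Sum>l<r. fps_nth (Btilde_H a2 \<beta> \<gamma> Bt H B) l / of_nat (2 * m) ^ l)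
                   = (\<Sum>j\<le>r. fps_nth A (2 * j) * (\<Sum>l<r. fps_nth (Btilde_even a2 \<beta> \<gamma> Bt j) l / of_nat (2 * m) ^ l))" for m
    by (simp add: Btilde_H_nth[OF a2] A_def sum_divide_distrib sum_distrib_left mult_ac sum.swap[of _ "{..<r}"])
  ultimately show "(\<lambda>m. fps_nth (H oo B) (2 * m) - complex_of_real (scale a2 \<beta> \<gamma> (2 * m))
                          * (\<Sum>l<r. fps_nth (Btilde_H a2 \<beta> \<gamma> Bt H B) l / of_nat (2 * m) ^ l))
                   \<in> O(\<lambda>m. complex_of_real (scale a2 \<beta> \<gamma> (2 * m)) / of_nat (2 * m) ^ r)"
    by (simp add: E_def c_def sum_distrib_left sum_subtractf algebra_simps)
qed

end
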